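(* Consider the semidefinite program $$p^*=\min_X \ \operatorname{Tr}(C^TX)\quad\text{s.t.}\quad \operatorname{Tr}(A_i^TX)=b_i\ (i=1,\dots,M),\quad X\succeq 0,$$ with $N\times N$ real symmetric data $C,A_1,\dots,A_M$, $b\in\mathbb{R}^M$, satisfying: $\operatorname{Tr}(A_i^TA_j)=0$ for all $i\neq j$, $\operatorname{Tr}(A_i^TC)=0$ for all $i$, $\|C\|_F=\|A_i\|_F=1$ for all $i$; there is a feasible $X\succ0$; and $p^*>-\infty$. For $t>0$ let $X_t$ be the minimizer of $\operatorname{Tr}(C^TX)-\frac1t\log\det X$ subject to $\operatorname{Tr}(A_i^TX)=b_i$, $X\succ0$, and let $\gamma(t)\in\mathbb{R}^M$ be the associated Lagrange multipliers, i.e. $X_t^{-1}=t\big(C-\sum_{i}\gamma_i(t)A_i\big)$. Let $K$ be either $DD_N$ (with $0<\Phi\le \frac{2}{N+1}$) or $SDD_N$ (with $0<\Phi\le 1$). Fix $t_0>0$ and $0<\epsilon^*\le N/t_0$, put $t^*=N/\epsilon^*$, and let $\Theta=\max_{t\in[t_0,t^*]}\sum_{i=1}^M\gamma_i(t)^2$. Run the following idealized (exact-centering) algorithm: $X_0=X_{t_0}$; for $k\ge1$, with $U_{k-1}$ the Cholesky factor of $X_{k-1}$ ($X_{k-1}=U_{k-1}^TU_{k-1}$), let $X_k^{\mathrm{dec}}$ be an optimizer of $$\min_{X,Y}\operatorname{Tr}(C^TX)\ \text{s.t.}\ \operatorname{Tr}(A_i^TX)=b_i\ (i=1,\dots,M),\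 X=U_{k-1}^TYU_{k-1},\ Y\in K,$$ and let $X_k$ be the maximizer of $\log\det X$ over $\{X\succ0:\operatorname{Tr}(A_i^TX)=b_i\ \forall i,\ \operatorname{Tr}(C^TX)=\operatorname{Tr}(C^TX_k^{\mathrm{dec}})\}$. Then, with $$\chi=\frac{N\sqrt{1+\Theta}}{N\sqrt{1+\Theta}-\sqrt{\Phi}}>1,\qquad \kappa=\left\lceil\frac{\log(N/\epsilon^* )-\log t_0}{\log\chi}\right\rceil,$$ the algorithm reaches $\epsilon^*$-optimality within $\kappa$ iterations: $\operatorname{Tr}(C^TX_\kappa)-p^*\le\epsilon^*$.
   Context: A symmetric matrix $X$ is diagonally dominant ($X\in DD_N$) if $X(i,i)\ge\sum_{j\ne i}|X(i,j)|$ for all $i$; it is scaled diagonally dominant ($X\in SDD_N$) if $X=DYD$ for some positive diagonal $D$ and some $Y\in DD_N$. The Cholesky factor $U$ of $X\succ0$ is the upper-triangular matrix with $X=U^TU$. The curve $t\mapsto X_t$ is the central path of the SDP. *)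

theory Defs
  imports "HOL-Analysis.Analysis"
begin

type_synonym 'n rmat = "real^'n^'n"

definition frob :: "'n::finite rmat \<Rightarrow> 'n rmat \<Rightarrow> real" where
  "frob A X = trace (transpose A ** X)"

definition frob_norm :: "'n::finite rmat \<Rightarrow> real" where
  "frob_norm A = sqrt (frob A A)"

definition sym_mat :: "'n::finite rmat \<Rightarrow> bool" where
  "sym_mat X \<longleftrightarrow> transpose X = X"

definition psd :: "'n::finite rmat \<Rightarrow> bool" where
  "psd X \<longleftrightarrow> sym_mat X \<and> (\<forall>v. 0 \<le> v \<bullet> (X *v v))"

definition pd :: "'n::finite rmat \<Rightarrow> bool" where
  "pd X \<longleftrightarrow> sym_mat X \<and> (\<forall>v. v \<noteq> 0 \<longrightarrow> 0 < v \<bullet> (X *v v))"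

definition dd :: "'n::finite rmat \<Rightarrow> bool" where
  "dd X \<longleftrightarrow> sym_mat X \<and> (\<forall>i. (\<Sum>j\<in>UNIV - {i}. \<bar>X$i$j\<bar>) \<le> X$i$i)"

definition diag_mat :: "real^'n \<Rightarrow> 'n::finite rmat" where
  "diag_mat d = (\<chi> i j. if i = j then d$i else 0)"

definition sdd :: "'n::finite rmat \<Rightarrow> bool" where
  "sdd X \<longleftrightarrow> (\<exists>d Y. (\<forall>i. 0 < d$i) \<and> dd Y \<and> X = diag_mat d ** Y ** diag_mat d)"

definition cholesky_factor :: "('n::{finite,wellorder}) rmat \<Rightarrow> 'n rmat \<Rightarrow> bool" where
  "cholesky_factor U X \<longleftrightarrow> (\<forall>i j. j < i \<longrightarrow> U$i$j = 0) \<and> (\<forall>i. 0 < U$i$i)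
     \<and> X = transpose U ** U"

definition sdp_feasible :: "nat \<Rightarrow> (nat \<Rightarrow> 'n::finite rmat) \<Rightarrow> (nat \<Rightarrow> real) \<Rightarrow> 'n rmat \<Rightarrow> bool" where
  "sdp_feasible M A b X \<longleftrightarrow> (\<forall>i<M. frob (A i) X = b i)"

definition sdp_opt :: "'n::finite rmat \<Rightarrow> nat \<Rightarrow> (nat \<Rightarrow> 'n rmat) \<Rightarrow> (nat \<Rightarrow> real) \<Rightarrow> real" where
  "sdp_opt C M A b = Inf {frob C X | X. sdp_feasible M A b X \<and> psd X}"

end

theory Submission
  imports Defs
begin

text \<open>
  Every iterate stays on the central path.  An iterate \<open>X\<^sub>k\<close> maximises \<open>log det\<close> on a
  slice of constant cost, so \<open>X\<^sub>k\<^sup>-\<^sup>1\<close> lies in the span of \<open>C\<close> and the \<open>A\<^sub>i\<close>; since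
  \<open>tr (X\<^sup>-\<^sup>1 Y) + tr (Y\<^sup>-\<^sup>1 X) \<ge> 2N\<close> for positive definite \<open>X, Y\<close>, with equality only if \<open>X = Y\<close>,
  comparing \<open>X\<^sub>k\<close> with points of the central path identifies it as some \<open>X\<^sub>t\<close> with \<open>t \<ge> t\<^sub>0\<close>.

  At \<open>X\<^sub>t = U\<^sup>T U\<close> the duality gap is at most \<open>N / t\<close>.  Because \<open>K\<close> contains the Frobenius ball
  of radius \<open>\<surd>\<Phi>\<close> around the identity, the inner approximation \<open>U\<^sup>T K U\<close> contains
  \<open>X\<^sub>t - c C\<close> whenever \<open>c \<parallel>U\<^sup>-\<^sup>T C U\<^sup>-\<^sup>1\<parallel> < \<surd>\<Phi>\<close>, and
  \<open>\<parallel>U\<^sup>-\<^sup>T C U\<^sup>-\<^sup>1\<parallel> \<le> \<parallel>X\<^sub>t\<^sup>-\<^sup>1\<parallel> = t (1 + \<Sum>\<gamma>\<^sub>i(t)\<^sup>2)\<^sup>1\<^sup>/\<^sup>2\<close>.  So each step lowers the cost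
  by at least \<open>q N / t\<close> with \<open>q = \<surd>\<Phi> / (N (1 + \<Theta>)\<^sup>1\<^sup>/\<^sup>2)\<close>, and the gap contracts by the
  factor \<open>1 - q = 1 / \<chi>\<close> until it falls below \<open>\<epsilon>\<close>.
\<close>

subsection \<open>Matrix algebra and the Frobenius norm\<close>

lemma frob_eq_inner: "frob A B = A \<bullet> B"
  unfolding frob_def trace_def matrix_matrix_mult_def transpose_def inner_vec_def
  by simp (rule sum.swap)

lemma norm_matrix_power2: "(norm (A::'n::finite rmat))\<^sup>2 = (\<Sum>i\<in>UNIV. \<Sum>j\<in>UNIV. (A$i$j)\<^sup>2)"
  unfolding power2_norm_eq_inner inner_vec_def by (simp add: power2_eq_square)

lemma norm_transpose: "norm (transpose (A::'n::finite rmat)) = norm A"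
proof -
  have "(norm (transpose A))\<^sup>2 = (norm A)\<^sup>2"
    unfolding norm_matrix_power2 transpose_def by simp (rule sum.swap)
  then show ?thesis by (simp add: power2_eq_iff_nonneg)
qed

lemma norm_matrix_vector_mult_le: "norm ((A::'n::finite rmat) *v v) \<le> norm A * norm v"
proof -
  have "(norm (A *v v))\<^sup>2 = (\<Sum>i\<in>UNIV. (A$i \<bullet> v)\<^sup>2)"
    unfolding power2_norm_eq_inner inner_vec_def matrix_vector_mult_def
    by (simp add: power2_eq_square inner_vec_def)
  also have "\<dots> \<le> (\<Sum>i\<in>UNIV. (norm (A$i))\<^sup>2 * (norm v)\<^sup>2)"
  proof (rule sum_mono)
    fix i
    have "\<bar>A$i \<bullet> v\<bar> \<le> norm (A$i) * norm v" by (rule Cauchy_Schwarz_ineq2)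
    then show "(A$i \<bullet> v)\<^sup>2 \<le> (norm (A$i))\<^sup>2 * (norm v)\<^sup>2"
      by (metis abs_ge_zero power2_abs power_mono power_mult_distrib)
  qed
  also have "\<dots> = (norm A)\<^sup>2 * (norm v)\<^sup>2"
    by (simp add: sum_distrib_right[symmetric] power2_norm_eq_inner inner_vec_def)
  finally have "(norm (A *v v))\<^sup>2 \<le> (norm A * norm v)\<^sup>2" by (simp add: power_mult_distrib)
  then show ?thesis by (simp add: power2_le_iff_abs_le)
qed

lemma norm_matrix_mult_le: "norm ((A::'n::finite rmat) ** (B::'n rmat)) \<le> norm A * norm B"
proof -
  have row: "(A ** B)$i = transpose B *v (A$i)" for i
    by (simp add: vec_eq_iff matrix_matrix_mult_def matrix_vector_mult_def transpose_def mult.commute)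
  have "(norm (A ** B))\<^sup>2 = (\<Sum>i\<in>UNIV. (norm ((A ** B)$i))\<^sup>2)"
    by (simp add: power2_norm_eq_inner inner_vec_def)
  also have "\<dots> \<le> (\<Sum>i\<in>UNIV. (norm B)\<^sup>2 * (norm (A$i))\<^sup>2)"
  proof (rule sum_mono)
    fix i
    have "norm ((A ** B)$i) \<le> norm B * norm (A$i)"
      using norm_matrix_vector_mult_le[of "transpose B" "A$i"] by (simp add: row norm_transpose)
    then show "(norm ((A ** B)$i))\<^sup>2 \<le> (norm B)\<^sup>2 * (norm (A$i))\<^sup>2"
      by (metis norm_ge_zero power_mono power_mult_distrib)
  qed
  also have "\<dots> = (norm B)\<^sup>2 * (norm A)\<^sup>2"
    by (simp add: sum_distrib_left[symmetric] power2_norm_eq_inner inner_vec_def)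
  finally have "(norm (A ** B))\<^sup>2 \<le> (norm A * norm B)\<^sup>2"
    by (simp add: power_mult_distrib mult.commute)
  then show ?thesis by (simp add: power2_le_iff_abs_le)
qed

lemma trace_mult_self_le: "trace ((Q::'n::finite rmat) ** Q) \<le> (norm Q)\<^sup>2"
proof -
  have "trace (Q ** Q) = transpose Q \<bullet> Q"
    using frob_def[of "transpose Q" Q] frob_eq_inner[of "transpose Q" Q] by simp
  also have "\<dots> \<le> norm (transpose Q) * norm Q" by (rule norm_cauchy_schwarz)
  also have "\<dots> = (norm Q)\<^sup>2" by (simp add: norm_transpose power2_eq_square)
  finally show ?thesis .
qed

lemma matrix_diff_ldistrib: "(A::'n::finite rmat) ** (B - C) = A ** B - A ** C"
  by (simp add: vec_eq_iff matrix_matrix_mult_def sum_subtractf algebra_simps)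

lemma matrix_diff_rdistrib: "((A::'n::finite rmat) - B) ** C = A ** C - B ** C"
  by (simp add: vec_eq_iff matrix_matrix_mult_def sum_subtractf algebra_simps)

lemma matrix_add_rdistrib: "((A::'n::finite rmat) + B) ** C = A ** C + B ** C"
  by (simp add: vec_eq_iff matrix_matrix_mult_def sum.distrib algebra_simps)

lemma matrix_scaleR_left: "(c *\<^sub>R (A::'n::finite rmat)) ** B = c *\<^sub>R (A ** B)"
  by (simp add: vec_eq_iff matrix_matrix_mult_def sum_distrib_left algebra_simps)

lemma matrix_scaleR_right: "(A::'n::finite rmat) ** (c *\<^sub>R B) = c *\<^sub>R (A ** B)"
  by (simp add: vec_eq_iff matrix_matrix_mult_def sum_distrib_left algebra_simps)

lemma transpose_add: "transpose ((A::'n::finite rmat) + B) = transpose A + transpose B"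
  by (simp add: vec_eq_iff transpose_def)

lemma transpose_diff: "transpose ((A::'n::finite rmat) - B) = transpose A - transpose B"
  by (simp add: vec_eq_iff transpose_def)

lemma trace_scaleR: "trace (c *\<^sub>R (A::'n::finite rmat)) = c * trace A"
  by (simp add: trace_def sum_distrib_left)

lemma matrix_inv_right: "invertible (A::'n::finite rmat) \<Longrightarrow> A ** matrix_inv A = mat 1"
  and matrix_inv_left: "invertible (A::'n::finite rmat) \<Longrightarrow> matrix_inv A ** A = mat 1"
  unfolding invertible_def matrix_inv_def by (metis (mono_tags, lifting) someI_ex)+

lemma matrix_inv_unique:
  fixes A B :: "'n::finite rmat"
  assumes "A ** B = mat 1"
  shows "matrix_inv A = B"
proof -
  have "invertible A"
    unfolding invertible_def using assms matrix_left_right_inverse by blast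
  then have "matrix_inv A = matrix_inv A ** (A ** B)" by (simp add: assms)
  also have "\<dots> = B" by (simp add: matrix_mul_assoc matrix_inv_left \<open>invertible A\<close>)
  finally show ?thesis .
qed

lemma matrix_inv_transpose:
  "invertible (A::'n::finite rmat) \<Longrightarrow> matrix_inv (transpose A) = transpose (matrix_inv A)"
  by (rule matrix_inv_unique) (simp add: matrix_transpose_mul[symmetric] matrix_inv_left)

lemma matrix_inv_mult:
  fixes A B :: "'n::finite rmat"
  assumes "invertible A" "invertible B"
  shows "matrix_inv (A ** B) = matrix_inv B ** matrix_inv A"
proof (rule matrix_inv_unique)
  have "A ** B ** (matrix_inv B ** matrix_inv A) = A ** (B ** matrix_inv B) ** matrix_inv A"
    by (simp add: matrix_mul_assoc)
  then show "A ** B ** (matrix_inv B ** matrix_inv A) = mat 1"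
    by (simp add: matrix_inv_right assms)
qed

lemma invertible_gram: "invertible (U::'n::finite rmat) \<Longrightarrow> invertible (transpose U ** U)"
  by (simp add: invertible_mult transpose_invertible)

lemma matrix_inv_gram:
  "invertible (U::'n::finite rmat) \<Longrightarrow>
     matrix_inv (transpose U ** U) = matrix_inv U ** transpose (matrix_inv U)"
  by (simp add: matrix_inv_mult transpose_invertible matrix_inv_transpose)

lemma transpose_matrix_inv_mult:
  "invertible (U::'n::finite rmat) \<Longrightarrow> transpose U ** transpose (matrix_inv U) = mat 1"
  by (metis matrix_inv_left matrix_transpose_mul transpose_mat)

lemma sym_mat_entry: "sym_mat F \<Longrightarrow> F$i$j = F$j$i"
  unfolding sym_mat_def by (metis transpose_def vec_lambda_beta)

lemma sym_mat_add: "sym_mat A \<Longrightarrow> sym_mat B \<Longrightarrow> sym_mat (A + B)"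
  by (simp add: sym_mat_def transpose_add)

lemma sym_mat_diff: "sym_mat A \<Longrightarrow> sym_mat B \<Longrightarrow> sym_mat (A - B)"
  by (simp add: sym_mat_def transpose_diff)

lemma sym_mat_scaleR: "sym_mat A \<Longrightarrow> sym_mat (c *\<^sub>R A)"
  by (simp add: sym_mat_def transpose_scalar)

lemma sym_mat_1: "sym_mat (mat 1 :: 'n::finite rmat)"
  by (simp add: sym_mat_def)

lemma sym_mat_sum:
  "(\<And>i. i \<in> S \<Longrightarrow> sym_mat (f i)) \<Longrightarrow> sym_mat (\<Sum>i\<in>S. f i :: 'n::finite rmat)"
proof (induction S rule: infinite_finite_induct)
  case (insert x F) then show ?case by (simp add: sym_mat_add)
qed (simp_all add: sym_mat_def vec_eq_iff transpose_def)

lemma sym_mat_congruence: "sym_mat A \<Longrightarrow> sym_mat (transpose B ** A ** B)"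
  by (simp add: sym_mat_def matrix_transpose_mul matrix_mul_assoc)

lemma sym_mat_gram: "sym_mat (transpose U ** (U::'n::finite rmat))"
  by (simp add: sym_mat_def matrix_transpose_mul)

lemma sym_mat_matrix_inv: "sym_mat X \<Longrightarrow> invertible X \<Longrightarrow> sym_mat (matrix_inv X)"
  unfolding sym_mat_def by (metis matrix_inv_transpose)

lemma frob_sym_eq_trace: "sym_mat A \<Longrightarrow> frob A B = trace (A ** B)"
  by (simp add: frob_def sym_mat_def)

lemma frob_matrix_inv_self:
  fixes X :: "'n::finite rmat"
  assumes "sym_mat X" "invertible X"
  shows "frob (matrix_inv X) X = real CARD('n)"
  using sym_mat_matrix_inv[OF assms] by (simp add: frob_sym_eq_trace matrix_inv_left assms trace_I)

subsection \<open>Positive definite matrices\<close>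

lemma pd_imp_sym: "pd X \<Longrightarrow> sym_mat X"
  by (simp add: pd_def)

lemma pd_imp_psd: "pd X \<Longrightarrow> psd X"
  unfolding pd_def psd_def by (metis inner_zero_left less_eq_real_def)

lemma pd_imp_invertible:
  fixes X :: "'n::finite rmat"
  assumes "pd X"
  shows "invertible X"
proof -
  have "x = 0" if "X *v x = 0" for x
    using assms that unfolding pd_def by (metis inner_zero_right less_irrefl)
  then show ?thesis using matrix_left_invertible_ker invertible_left_inverse by blast
qed

lemma pd_matrix_inv:
  fixes X :: "'n::finite rmat"
  assumes "pd X"
  shows "pd (matrix_inv X)"
  unfolding pd_def
proof (intro conjI allI impI)
  have inv: "invertible X" using pd_imp_invertible assms by blast
  show "sym_mat (matrix_inv X)" using sym_mat_matrix_inv pd_imp_sym assms inv by blast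
  fix v :: "real^'n" assume v: "v \<noteq> 0"
  define w where "w = matrix_inv X *v v"
  have Xw: "X *v w = v" unfolding w_def by (simp add: matrix_vector_mul_assoc matrix_inv_right inv)
  then have "w \<noteq> 0" using v by auto
  then have "0 < w \<bullet> (X *v w)" using assms pd_def by blast
  then show "0 < v \<bullet> (matrix_inv X *v v)"
    unfolding Xw by (simp add: inner_commute w_def)
qed

lemma pd_scaleR:
  fixes X :: "'n::finite rmat"
  assumes "pd X" "0 < c"
  shows "pd (c *\<^sub>R X)"
  using assms unfolding pd_def
  by (simp add: sym_mat_scaleR scaleR_matrix_vector_assoc[symmetric])

lemma pd_congruence:
  fixes P U :: "'n::finite rmat"
  assumes "pd P" "invertible U"
  shows "pd (transpose U ** P ** U)"
  unfolding pd_def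
proof (intro conjI allI impI)
  show "sym_mat (transpose U ** P ** U)" using sym_mat_congruence pd_imp_sym assms(1) by blast
  fix v :: "real^'n" assume v: "v \<noteq> 0"
  have "U *v v \<noteq> 0"
    using v matrix_left_invertible_ker assms(2) invertible_def by blast
  then have "0 < (U *v v) \<bullet> (P *v (U *v v))" using assms(1) pd_def by blast
  also have "(U *v v) \<bullet> (P *v (U *v v)) = v \<bullet> (transpose U *v (P *v (U *v v)))"
    by (metis dot_lmul_matrix vector_transpose_matrix)
  also have "\<dots> = v \<bullet> ((transpose U ** P ** U) *v v)"
    by (simp only: matrix_vector_mul_assoc matrix_mul_assoc)
  finally show "0 < v \<bullet> ((transpose U ** P ** U) *v v)" .
qed

lemma pd_mat1_add:
  fixes E :: "'n::finite rmat"
  assumes "sym_mat E" "norm E < 1"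
  shows "pd (mat 1 + E)"
  unfolding pd_def
proof (intro conjI allI impI)
  show "sym_mat (mat 1 + E)" using sym_mat_add[OF sym_mat_1 assms(1)] .
  fix v :: "real^'n" assume v: "v \<noteq> 0"
  have "\<bar>v \<bullet> (E *v v)\<bar> \<le> norm v * norm (E *v v)" by (rule Cauchy_Schwarz_ineq2)
  also have "\<dots> \<le> norm v * (norm E * norm v)"
    by (simp add: mult_left_mono norm_matrix_vector_mult_le)
  also have "\<dots> < v \<bullet> v"
    using assms(2) v by (simp add: power2_norm_eq_inner[symmetric] power2_eq_square)
  finally show "0 < v \<bullet> ((mat 1 + E) *v v)"
    by (simp add: matrix_vector_mult_add_rdistrib inner_add_right)
qed

lemma diag_congruence:
  "(transpose B ** Q ** B)$j$j = column j B \<bullet> (Q *v column j B)" for B Q :: "'n::finite rmat"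
  unfolding matrix_matrix_mult_def transpose_def column_def inner_vec_def matrix_vector_mult_def
  by (simp add: sum_distrib_left sum_distrib_right) (subst sum.swap, simp add: mult_ac)

lemma trace_congruence_nonneg:
  "psd Q \<Longrightarrow> 0 \<le> trace (transpose B ** Q ** B)" for B Q :: "'n::finite rmat"
  unfolding trace_def diag_congruence psd_def by (simp add: sum_nonneg)

lemma trace_congruence_eq_0_imp:
  fixes B Q :: "'n::finite rmat"
  assumes "pd Q" "trace (transpose B ** Q ** B) = 0"
  shows "B = 0"
proof -
  have "column j B \<bullet> (Q *v column j B) = 0" for j
    using assms(2) pd_imp_psd[OF assms(1)]
    unfolding trace_def diag_congruence psd_def by (simp add: sum_nonneg_eq_0_iff)
  then have "column j B = 0" for j
    using assms(1) unfolding pd_def by (metis less_irrefl)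
  then show "B = 0" by (simp add: vec_eq_iff column_def)
qed

lemma trace_congruence_eq: "trace (transpose B ** Q ** B) = trace (Q ** (B ** transpose B))"
  for B Q :: "'n::finite rmat"
  by (metis matrix_mul_assoc trace_mul_sym)

lemma frob_inv_gram_nonneg:
  fixes U Y :: "'n::finite rmat"
  assumes "invertible U" "psd Y"
  shows "0 \<le> frob (matrix_inv (transpose U ** U)) Y"
proof -
  define W where "W = matrix_inv U"
  have "frob (matrix_inv (transpose U ** U)) Y = trace (W ** transpose W ** Y)"
    unfolding matrix_inv_gram[OF assms(1)] W_def[symmetric] frob_def
    by (simp add: matrix_transpose_mul)
  also have "\<dots> = trace (transpose W ** Y ** W)"
    by (metis trace_congruence_eq trace_mul_sym)
  finally show ?thesis using trace_congruence_nonneg[OF assms(2)] by simp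
qed

text \<open>For \<open>X\<^sub>1 = U\<^sup>T U\<close> and \<open>B = (X\<^sub>2 - X\<^sub>1) U\<^sup>-\<^sup>1\<close>, the left-hand side is
  \<open>tr ((X\<^sub>2 - X\<^sub>1) X\<^sub>2\<^sup>-\<^sup>1 (X\<^sub>2 - X\<^sub>1) X\<^sub>1\<^sup>-\<^sup>1)\<close>; expanding the product gives the right-hand side.\<close>
lemma trace_congruence_inv_diff:
  fixes U X2 :: "'n::finite rmat"
  assumes U: "invertible U" and pd2: "pd X2"
  defines "X1 \<equiv> transpose U ** U"
  defines "B \<equiv> (X2 - X1) ** matrix_inv U"
  shows "trace (transpose B ** matrix_inv X2 ** B)
         = frob (matrix_inv X1) X2 + frob (matrix_inv X2) X1 - 2 * real CARD('n)"
proof -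
  define W where "W = matrix_inv U"
  define P1 where "P1 = W ** transpose W"
  define P2 where "P2 = matrix_inv X2"
  define D where "D = X2 - X1"
  have inv2: "invertible X2" using pd_imp_invertible[OF pd2] .
  have sym1: "sym_mat X1" unfolding X1_def by (rule sym_mat_gram)
  have P1inv: "matrix_inv X1 = P1" unfolding X1_def P1_def W_def by (rule matrix_inv_gram[OF U])
  have X1P1: "X1 ** P1 = mat 1"
    using matrix_inv_right[OF invertible_gram[OF U]] P1inv X1_def by simp
  have X2P2: "X2 ** P2 = mat 1" "P2 ** X2 = mat 1"
    using matrix_inv_right[OF inv2] matrix_inv_left[OF inv2] P2_def by auto
  have symP1: "sym_mat P1" unfolding P1_def by (simp add: sym_mat_def matrix_transpose_mul)
  have symP2: "sym_mat P2" unfolding P2_def using sym_mat_matrix_inv[OF pd_imp_sym[OF pd2] inv2] .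
  have symD: "sym_mat D" unfolding D_def using sym_mat_diff[OF pd_imp_sym[OF pd2] sym1] .
  have "trace (transpose B ** P2 ** B) = trace (transpose W ** (D ** P2 ** D) ** W)"
    using symD unfolding B_def W_def[symmetric] D_def[symmetric] sym_mat_def
    by (simp add: matrix_transpose_mul matrix_mul_assoc)
  also have "\<dots> = trace (D ** P2 ** D ** P1)"
    unfolding P1_def trace_congruence_eq by (simp add: matrix_mul_assoc)
  also have "D ** P2 ** D ** P1 = X2 ** P1 - 2 *\<^sub>R mat 1 + X1 ** P2"
  proof -
    have "X1 ** P2 ** X2 = X1" "X1 ** P2 ** X1 ** P1 = X1 ** P2"
      by (metis X2P2(2) X1P1 matrix_mul_assoc matrix_mul_rid)+
    then have "D ** P2 ** D = X2 - 2 *\<^sub>R X1 + X1 ** P2 ** X1"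
      unfolding D_def by (simp add: matrix_diff_rdistrib matrix_diff_ldistrib X2P2 scaleR_2 algebra_simps)
    then show ?thesis
      using \<open>X1 ** P2 ** X1 ** P1 = X1 ** P2\<close>
      by (simp add: matrix_diff_rdistrib matrix_add_rdistrib matrix_scaleR_left X1P1)
  qed
  also have "trace (X2 ** P1 - 2 *\<^sub>R mat 1 + X1 ** P2)
      = trace (X2 ** P1) - 2 * real CARD('n) + trace (X1 ** P2)"
    by (simp only: trace_add trace_sub trace_scaleR trace_I)
  also have "trace (X2 ** P1) = frob P1 X2"
    using frob_sym_eq_trace[OF symP1] trace_mul_sym by metis
  also have "trace (X1 ** P2) = frob P2 X1"
    using frob_sym_eq_trace[OF symP2] trace_mul_sym by metis
  finally show ?thesis unfolding P1inv[symmetric] P2_def by simp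
qed

lemma frob_inv_sum_ge:
  fixes U X :: "'n::finite rmat"
  assumes "invertible U" "pd X"
  shows "2 * real CARD('n) \<le> frob (matrix_inv (transpose U ** U)) X + frob (matrix_inv X) (transpose U ** U)"
  using trace_congruence_inv_diff[OF assms]
    trace_congruence_nonneg[OF pd_imp_psd[OF pd_matrix_inv[OF assms(2)]],
      of "(X - transpose U ** U) ** matrix_inv U"] by simp

lemma frob_inv_sum_eq_imp_eq:
  fixes U X :: "'n::finite rmat"
  assumes U: "invertible U" and X: "pd X"
    and eq: "frob (matrix_inv (transpose U ** U)) X + frob (matrix_inv X) (transpose U ** U)
               = 2 * real CARD('n)"
  shows "transpose U ** U = X"
proof -
  have "(X - transpose U ** U) ** matrix_inv U = 0"
    using trace_congruence_inv_diff[OF U X] eq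
    by (intro trace_congruence_eq_0_imp[OF pd_matrix_inv[OF X]]) simp
  then have "(X - transpose U ** U) ** (matrix_inv U ** U) = 0"
    by (simp add: matrix_mul_assoc)
  then show ?thesis by (simp add: matrix_inv_left[OF U])
qed

lemma norm_inv_congruence_le:
  fixes U C :: "'n::finite rmat"
  assumes U: "invertible U" and symC: "sym_mat C"
  shows "norm (transpose (matrix_inv U) ** C ** matrix_inv U)
           \<le> norm C * norm (matrix_inv (transpose U ** U))"
proof -
  define W where "W = matrix_inv U"
  define V where "V = transpose W ** C ** W"
  define P where "P = matrix_inv (transpose U ** U)"
  have PW: "P = W ** transpose W" unfolding P_def W_def by (rule matrix_inv_gram[OF U])
  have "(norm V)\<^sup>2 = trace (V ** V)"
    using sym_mat_congruence[OF symC, of W]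
    by (simp add: V_def power2_norm_eq_inner frob_eq_inner[symmetric] frob_def sym_mat_def)
  also have "V ** V = transpose W ** (C ** P ** C) ** W"
    unfolding V_def PW by (simp add: matrix_mul_assoc)
  also have "trace \<dots> = trace ((C ** P) ** (C ** P))"
    unfolding trace_congruence_eq PW[symmetric] by (simp add: matrix_mul_assoc)
  also have "\<dots> \<le> (norm (C ** P))\<^sup>2" by (rule trace_mult_self_le)
  also have "\<dots> \<le> (norm C * norm P)\<^sup>2" by (intro power_mono norm_matrix_mult_le) simp
  finally show ?thesis
    unfolding V_def W_def P_def by (simp add: power2_le_iff_abs_le)
qed

lemma inner_axis_matrix_axis: "axis i 1 \<bullet> ((Q::'n::finite rmat) *v axis j 1) = Q$i$j"
proof -
  have "(Q *v axis j 1)$i = (\<Sum>k\<in>UNIV. if k = j then Q$i$k else 0)"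
    unfolding matrix_vector_mult_def axis_def by (simp add: if_distrib cong: if_cong)
  then show ?thesis by (simp add: inner_axis')
qed

lemma psd_abs_entry_le_trace:
  fixes Q :: "'n::finite rmat"
  assumes "psd Q"
  shows "\<bar>Q$i$j\<bar> \<le> trace Q"
proof -
  have nn: "0 \<le> v \<bullet> (Q *v v)" for v using assms psd_def by auto
  have diag: "0 \<le> Q$k$k" for k using nn[of "axis k 1"] by (simp add: inner_axis_matrix_axis)
  have "0 \<le> Q$i$i + Q$j$j + 2 * s * Q$i$j" if "s = 1 \<or> s = -1" for s
  proof -
    define w :: "real^'n" where "w = axis i 1 + s *\<^sub>R axis j 1"
    have "w \<bullet> (Q *v w) = Q$i$i + 2 * s * Q$i$j + s * s * Q$j$j"
      using sym_mat_entry[of Q j i] assms unfolding w_def psd_def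
      by (simp add: matrix_vector_right_distrib inner_add_left inner_add_right
          matrix_vector_mult_scaleR inner_axis_matrix_axis algebra_simps)
    then show ?thesis using nn[of w] that by auto
  qed
  from this[of 1] this[of "-1"] have "\<bar>Q$i$j\<bar> \<le> (Q$i$i + Q$j$j) / 2"
    by (simp add: abs_le_iff)
  also have "\<dots> \<le> trace Q"
  proof (cases "i = j")
    case False
    then have "Q$i$i + Q$j$j = (\<Sum>k\<in>{i, j}. Q$k$k)" by simp
    also have "\<dots> \<le> trace Q" unfolding trace_def by (intro sum_mono2) (auto simp: diag)
    finally show ?thesis using diag[of i] diag[of j] by simp
  qed (use member_le_sum[of j UNIV "\<lambda>k. Q$k$k"] diag in \<open>simp add: trace_def\<close>)
  finally show ?thesis .
qed

lemma psd_norm_le_trace: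
  fixes Q :: "'n::finite rmat"
  assumes "psd Q"
  shows "norm Q \<le> real CARD('n) * trace Q"
proof -
  have tr0: "0 \<le> trace Q" using psd_abs_entry_le_trace[OF assms] abs_ge_zero order_trans by blast
  have "(Q$i$j)\<^sup>2 \<le> (trace Q)\<^sup>2" for i j
    using psd_abs_entry_le_trace[OF assms, of i j] tr0 by (simp add: power2_le_iff_abs_le)
  then have "(norm Q)\<^sup>2 \<le> (\<Sum>i\<in>(UNIV::'n set). \<Sum>j\<in>(UNIV::'n set). (trace Q)\<^sup>2)"
    unfolding norm_matrix_power2 by (intro sum_mono) auto
  also have "\<dots> = (real CARD('n) * trace Q)\<^sup>2" by (simp add: power2_eq_square)
  finally show ?thesis using tr0 by (simp add: power2_le_iff_abs_le)
qed

lemma pd_norm_le_frob_gram: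
  fixes U S :: "'n::finite rmat"
  assumes U: "invertible U" and S: "pd S"
  shows "norm S \<le> (norm (matrix_inv U))\<^sup>2 * real CARD('n) * frob S (transpose U ** U)"
proof -
  define W where "W = matrix_inv U"
  define S' where "S' = U ** S ** transpose U"
  have "pd S'" unfolding S'_def using pd_congruence[OF S transpose_invertible[OF U]] by simp
  have "S = W ** S' ** transpose W"
  proof -
    have "W ** S' ** transpose W = (W ** U) ** S ** (transpose U ** transpose W)"
      unfolding S'_def by (simp add: matrix_mul_assoc)
    then show ?thesis by (simp add: W_def matrix_inv_left U transpose_matrix_inv_mult)
  qed
  then have "norm S \<le> norm (W ** S') * norm (transpose W)"
    using norm_matrix_mult_le by metis
  also have "\<dots> \<le> norm W * norm S' * norm W"
    by (simp add: norm_transpose mult_right_mono norm_matrix_mult_le)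
  also have "\<dots> \<le> norm W * (real CARD('n) * trace S') * norm W"
    using psd_norm_le_trace[OF pd_imp_psd[OF \<open>pd S'\<close>]]
    by (intro mult_right_mono mult_left_mono) simp_all
  also have "trace S' = frob S (transpose U ** U)"
    using trace_congruence_eq[of "transpose U" S]
    unfolding S'_def frob_sym_eq_trace[OF pd_imp_sym[OF S]] by simp
  finally show ?thesis unfolding W_def by (simp add: power2_eq_square mult_ac)
qed

subsection \<open>Diagonally dominant neighbourhoods of the identity\<close>

lemma sym_row_power2_le_norm:
  fixes F :: "'n::finite rmat"
  assumes "sym_mat F"
  shows "(F$i$i)\<^sup>2 + 2 * (\<Sum>j\<in>UNIV-{i}. (F$i$j)\<^sup>2) \<le> (norm F)\<^sup>2"
proof -
  have "(\<Sum>j\<in>UNIV-{i}. (F$i$j)\<^sup>2) = (\<Sum>a\<in>UNIV-{i}. (F$a$i)\<^sup>2)"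
    using sym_mat_entry[OF assms] by simp
  also have "\<dots> \<le> (\<Sum>a\<in>UNIV-{i}. \<Sum>b\<in>UNIV. (F$a$b)\<^sup>2)"
    by (intro sum_mono member_le_sum) auto
  finally show ?thesis
    unfolding norm_matrix_power2 by (simp add: sum.remove[of UNIV i])
qed

text \<open>Row \<open>i\<close> of \<open>F\<close> has \<open>N - 1\<close> off-diagonal entries, so by Cauchy-Schwarz their absolute sum
  \<open>s\<close> satisfies \<open>s\<^sup>2 \<le> (N - 1) q\<close> with \<open>q\<close> their sum of squares; the bound
  \<open>(N + 1) (x\<^sup>2 + 2 q) \<le> 2\<close> on the diagonal entry \<open>x\<close> then forces \<open>(N - 1) q \<le> (1 + x)\<^sup>2\<close>.\<close>
lemma dd_mat1_add:
  fixes F :: "'n::finite rmat"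
  assumes symF: "sym_mat F" and nF: "(norm F)\<^sup>2 \<le> \<Phi>" and Phi: "\<Phi> \<le> 2 / (real CARD('n) + 1)"
  shows "dd (mat 1 + F)"
  unfolding dd_def
proof (intro conjI allI)
  show "sym_mat (mat 1 + F)" using sym_mat_add[OF sym_mat_1 symF] .
  fix i
  define N where "N = real CARD('n)"
  define x where "x = F$i$i"
  define s where "s = (\<Sum>j\<in>UNIV-{i}. \<bar>F$i$j\<bar>)"
  define q where "q = (\<Sum>j\<in>UNIV-{i}. (F$i$j)\<^sup>2)"
  have N1: "1 \<le> N" unfolding N_def by (simp add: Suc_leI)
  have s2: "s\<^sup>2 \<le> (N - 1) * q"
  proof -
    have "s\<^sup>2 \<le> (\<Sum>j\<in>UNIV-{i}. \<bar>F$i$j\<bar>\<^sup>2) * card (UNIV - {i})"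
      unfolding s_def by (rule sum_squared_le_sum_of_squares)
    also have "\<dots> = q * (N - 1)"
      unfolding q_def N_def by (simp add: card_Diff_singleton of_nat_diff Suc_leI)
    finally show ?thesis by (simp add: mult.commute)
  qed
  have xq: "x\<^sup>2 + 2 * q \<le> \<Phi>"
    using sym_row_power2_le_norm[OF symF, of i] nF unfolding x_def q_def by simp
  have q0: "0 \<le> q" unfolding q_def by (simp add: sum_nonneg)
  have "2 / (N + 1) \<le> 1" using N1 by (simp add: divide_le_eq)
  then have "x\<^sup>2 \<le> 1" using xq q0 Phi unfolding N_def by linarith
  then have x1: "0 \<le> 1 + x" by (simp add: abs_square_le_1)
  have "(N - 1) * q \<le> (1 + x)\<^sup>2"
  proof -
    have "(N + 1) * (x\<^sup>2 + 2 * q) \<le> (N + 1) * \<Phi>" using xq N1 by (intro mult_left_mono) auto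
    also have "\<dots> \<le> 2" using Phi N1 unfolding N_def[symmetric] by (simp add: le_divide_eq mult.commute)
    finally have a: "2 * (N + 1) * q \<le> 2 - (N + 1) * x\<^sup>2" by (simp add: algebra_simps)
    have "2 * (N + 1) * ((N - 1) * q) = (N - 1) * (2 * (N + 1) * q)" by (simp add: algebra_simps)
    also have "\<dots> \<le> (N - 1) * (2 - (N + 1) * x\<^sup>2)" using a N1 by (intro mult_left_mono) auto
    also have "\<dots> \<le> 2 * (N + 1) * (1 + x)\<^sup>2"
      using zero_le_power2[of "(N + 1) * x + 2"] by (simp add: algebra_simps power2_eq_square)
    finally show ?thesis using N1 by (simp add: mult_le_cancel_left_pos)
  qed
  then have "\<bar>s\<bar> \<le> 1 + x"
    using s2 x1 power2_le_iff_abs_le by (metis order_trans)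
  then have "s \<le> 1 + x" by simp
  moreover have "(\<Sum>j\<in>UNIV - {i}. \<bar>(mat 1 + F)$i$j\<bar>) = s"
    unfolding s_def by (rule sum.cong) (auto simp: mat_def)
  ultimately show "(\<Sum>j\<in>UNIV - {i}. \<bar>(mat 1 + F)$i$j\<bar>) \<le> (mat 1 + F)$i$i"
    by (simp add: mat_def x_def)
qed

lemma diag_mat_congruence_entry:
  fixes Y :: "'n::finite rmat"
  shows "(diag_mat d ** Y ** diag_mat d)$i$j = d$i * Y$i$j * d$j"
proof -
  have "(diag_mat d ** Y)$i$k = d$i * Y$i$k" for k
    unfolding matrix_matrix_mult_def diag_mat_def
    by (simp add: if_distrib if_distribR sum.delta cong: if_cong)
  then show ?thesis
    unfolding matrix_matrix_mult_def[of "diag_mat d ** Y"]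
    by (simp add: diag_mat_def if_distrib if_distribR sum.delta cong: if_cong)
qed

text \<open>Writing \<open>z = p - n\<close> with
  \<open>p, n \<ge> 0\<close> of disjoint support, the sign pattern gives \<open>n \<bullet> Q p \<le> 0\<close>, whence
  \<open>n \<bullet> Q n \<le> 0\<close> and \<open>n = 0\<close>.\<close>
lemma pos_solution_Z_matrix:
  fixes Q :: "'n::finite rmat" and z :: "real^'n"
  assumes pdQ: "pd Q" and offdiag: "\<And>i j. i \<noteq> j \<Longrightarrow> Q$i$j \<le> 0"
    and Qz: "\<And>i. (\<Sum>j\<in>UNIV. Q$i$j * z$j) = 1"
  shows "0 < z$i"
proof -
  define p :: "real^'n" where "p = (\<chi> i. max 0 (z$i))"
  define n :: "real^'n" where "n = (\<chi> i. max 0 (- z$i))"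
  have zpn: "z = p - n" unfolding p_def n_def by (simp add: vec_eq_iff max_def)
  have "n \<bullet> (Q *v z) = (\<Sum>i\<in>UNIV. n$i)"
    using Qz by (simp add: inner_vec_def matrix_vector_mult_def)
  also have "\<dots> \<ge> 0" unfolding n_def by (simp add: sum_nonneg)
  finally have h1: "0 \<le> n \<bullet> (Q *v z)" .
  have "n \<bullet> (Q *v p) = (\<Sum>i\<in>UNIV. \<Sum>j\<in>UNIV. n$i * Q$i$j * p$j)"
    by (simp add: inner_vec_def matrix_vector_mult_def sum_distrib_left mult_ac)
  also have "\<dots> \<le> 0"
  proof (intro sum_nonpos)
    fix i j
    have "n$i * p$i = 0" "0 \<le> n$i" "0 \<le> p$j" unfolding n_def p_def by (simp_all add: max_def)
    then show "n$i * Q$i$j * p$j \<le> 0"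
      using offdiag[of i j] by (cases "i = j") (auto simp: mult_nonneg_nonpos mult_nonpos_nonneg)
  qed
  finally have "n \<bullet> (Q *v n) \<le> 0"
    using h1 unfolding zpn by (simp add: matrix_vector_mult_diff_distrib inner_diff_right)
  then have "n = 0" using pdQ unfolding pd_def by (meson not_less)
  then have "z$j \<le> 0 \<longrightarrow> z$j = 0" for j
    unfolding n_def by (simp add: vec_eq_iff max_def split: if_splits)
  then have z0: "0 \<le> z$j" for j by (metis nle_le)
  have "(\<Sum>j\<in>UNIV-{i}. Q$i$j * z$j) \<le> 0"
    by (intro sum_nonpos) (auto simp: offdiag z0 mult_nonpos_nonneg)
  then have "1 \<le> Q$i$i * z$i" using Qz[of i] by (simp add: sum.remove[of UNIV i])
  then show ?thesis using z0[of i] by (cases "z$i = 0") auto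
qed

text \<open>The comparison matrix \<open>Q\<close> of \<open>mat 1 + F\<close> (off-diagonal entries replaced by minus
  their absolute values) is still positive definite; its positive solution \<open>z\<close> of
  \<open>Q z = 1\<close> is a diagonal scaling that makes \<open>mat 1 + F\<close> diagonally dominant.\<close>
lemma sdd_mat1_add:
  fixes F :: "'n::finite rmat"
  assumes symF: "sym_mat F" and nF: "norm F < 1"
  shows "sdd (mat 1 + F)"
proof -
  define G :: "'n rmat" where "G = (\<chi> i j. if i = j then F$i$j else - \<bar>F$i$j\<bar>)"
  define Q where "Q = mat 1 + G"
  have "sym_mat G"
    unfolding sym_mat_def G_def transpose_def by (simp add: vec_eq_iff sym_mat_entry[OF symF])
  moreover have "(norm G)\<^sup>2 = (norm F)\<^sup>2"
    unfolding norm_matrix_power2 G_def by (intro sum.cong refl) (simp add: power2_abs)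
  ultimately have pdQ: "pd Q" unfolding Q_def using pd_mat1_add[of G] nF by (simp add: power2_eq_iff_nonneg)
  have Qij: "Q$i$j = (if i = j then 1 + F$i$i else - \<bar>F$i$j\<bar>)" for i j
    unfolding Q_def G_def by (simp add: mat_def)
  define z where "z = matrix_inv Q *v (\<chi> i. 1)"
  have "Q *v z = (\<chi> i. 1)"
    unfolding z_def by (simp add: matrix_vector_mul_assoc matrix_inv_right pd_imp_invertible pdQ)
  then have Qz: "(\<Sum>j\<in>UNIV. Q$i$j * z$j) = 1" for i
    unfolding matrix_vector_mult_def by (simp add: vec_eq_iff)
  have zpos: "0 < z$i" for i
    using pos_solution_Z_matrix[OF pdQ _ Qz] Qij by simp
  define d :: "real^'n" where "d = (\<chi> i. 1 / z$i)"
  define Y :: "'n rmat" where "Y = (\<chi> i j. z$i * (mat 1 + F)$i$j * z$j)"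
  have "(diag_mat d ** Y ** diag_mat d)$i$j = (mat 1 + F)$i$j" for i j
    using zpos[of i] zpos[of j] by (simp add: diag_mat_congruence_entry d_def Y_def)
  then have "mat 1 + F = diag_mat d ** Y ** diag_mat d" by (simp add: vec_eq_iff)
  moreover have "dd Y"
    unfolding dd_def
  proof (intro conjI allI)
    show "sym_mat Y"
      unfolding sym_mat_def Y_def transpose_def by (simp add: vec_eq_iff mat_def sym_mat_entry[OF symF] mult_ac)
    fix i
    have "(\<Sum>j\<in>UNIV-{i}. \<bar>Y$i$j\<bar>) = z$i * (\<Sum>j\<in>UNIV-{i}. \<bar>F$i$j\<bar> * z$j)"
      unfolding Y_def sum_distrib_left
      using zpos by (intro sum.cong refl) (auto simp: mat_def abs_mult abs_of_pos)
    also have "\<dots> \<le> z$i * ((1 + F$i$i) * z$i)"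
      using Qz[of i] zpos[of i] by (simp add: sum.remove[of UNIV i] Qij sum_negf)
    also have "\<dots> = Y$i$i" unfolding Y_def by (simp add: mat_def)
    finally show "(\<Sum>j\<in>UNIV-{i}. \<bar>Y$i$j\<bar>) \<le> Y$i$i" .
  qed
  moreover have "\<forall>i. 0 < d$i" unfolding d_def using zpos by simp
  ultimately show ?thesis unfolding sdd_def by blast
qed

subsection \<open>Maximisers of the log-determinant\<close>

lemma prod_delta_permutes_remove_eq_0:
  assumes p: "p permutes (UNIV :: 'n::finite set)" and ne: "p \<noteq> id"
  shows "(\<Prod>i\<in>UNIV - {j}. (if i = p i then 1 else 0 :: real)) = 0"
proof -
  obtain a where a: "p a \<noteq> a" using ne by (metis eq_id_iff)
  have "p (p a) \<noteq> p a"
    using a permutes_inj[OF p] by (metis injD)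
  then obtain b where "b \<noteq> j" "p b \<noteq> b"
    using a by metis
  then show ?thesis by (intro prod_zero) (auto intro: bexI[of _ b])
qed

lemma has_real_derivative_det_mat1_add:
  fixes E :: "'n::finite rmat"
  shows "((\<lambda>s. det (mat 1 + s *\<^sub>R E)) has_real_derivative trace E) (at 0)"
proof -
  define P where "P = {p. p permutes (UNIV :: 'n set)}"
  define f where "f = (\<lambda>p s. of_int (sign p) *
      (\<Prod>i\<in>UNIV. (if i = p i then 1 else 0) + s * E$i$(p i)) :: real)"
  define f' where "f' = (\<lambda>p. of_int (sign p) * (\<Sum>j\<in>UNIV. E$j$(p j) *
      (\<Prod>i\<in>UNIV-{j}. (if i = p i then 1 else 0) + 0 * E$i$(p i))) :: real)"
  have "(\<lambda>s. det (mat 1 + s *\<^sub>R E)) = (\<lambda>s. \<Sum>p\<in>P. f p s)"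
    unfolding det_def P_def f_def by (simp add: mat_def)
  moreover have "(f p has_real_derivative f' p) (at 0)" for p
    unfolding f_def f'_def
    by (intro DERIV_cmult has_field_derivative_prod) (auto intro!: derivative_eq_intros)
  then have "((\<lambda>s. \<Sum>p\<in>P. f p s) has_real_derivative (\<Sum>p\<in>P. f' p)) (at 0)"
    by (intro DERIV_sum) auto
  moreover have "(\<Sum>p\<in>P. f' p) = trace E"
  proof -
    have "f' p = (if p = id then trace E else 0)" if "p \<in> P" for p
    proof (cases "p = id")
      case True then show ?thesis unfolding f'_def trace_def by simp
    next
      case False
      have "(\<Prod>i\<in>UNIV - {j}. (if i = p i then 1 else 0) + 0 * E$i$(p i)) = (0::real)" for j
        using prod_delta_permutes_remove_eq_0[of p j] that False unfolding P_def by simp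
      then show ?thesis unfolding f'_def by (simp only:) (use False in simp)
    qed
    then have "(\<Sum>p\<in>P. f' p) = (\<Sum>p\<in>P. if p = id then trace E else 0)"
      by (intro sum.cong) auto
    also have "\<dots> = trace E" by (simp add: P_def permutes_id)
    finally show ?thesis .
  qed
  ultimately show ?thesis by simp
qed

lemma exists_det_mat1_add_gt_1:
  fixes E :: "'n::finite rmat"
  assumes "trace E \<noteq> 0" "0 < c"
  shows "\<exists>s. \<bar>s\<bar> < c \<and> 1 < det (mat 1 + s *\<^sub>R E)"
proof -
  have pos: "\<exists>s. 0 < s \<and> s < c \<and> 1 < det (mat 1 + s *\<^sub>R F)" if "0 < trace F" for F :: "'n rmat"
  proof -
    from DERIV_pos_inc_right[OF has_real_derivative_det_mat1_add[of F] that]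
    obtain d where "0 < d"
      and d: "\<forall>h>0. h < d \<longrightarrow> det (mat 1 + 0 *\<^sub>R F) < det (mat 1 + (0 + h) *\<^sub>R F)"
      by blast
    then show ?thesis
      using assms(2) d by (intro exI[of _ "min (d/2) (c/2)"]) auto
  qed
  show ?thesis
  proof (cases "0 < trace E")
    case True
    then obtain s where "0 < s" "s < c" "1 < det (mat 1 + s *\<^sub>R E)" using pos by blast
    then show ?thesis by (intro exI[of _ s]) auto
  next
    case False
    then have "0 < trace (- E)" using assms(1) by (simp add: trace_def sum_negf)
    then obtain s where "0 < s" "s < c" "1 < det (mat 1 + s *\<^sub>R (- E))" using pos by blast
    then show ?thesis by (intro exI[of _ "- s"]) auto
  qed
qed

text \<open>\<open>tr (X\<^sup>-\<^sup>1 D)\<close> is the derivative of \<open>s \<mapsto> log det (X + s D)\<close> at \<open>s = 0\<close>.\<close>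
lemma frob_inv_eq_0_if_logdet_max:
  fixes U D :: "'n::finite rmat"
  assumes U: "invertible U" and symD: "sym_mat D"
    and max: "\<And>s. pd (transpose U ** U + s *\<^sub>R D) \<Longrightarrow>
                ln (det (transpose U ** U + s *\<^sub>R D)) \<le> ln (det (transpose U ** U))"
  shows "frob (matrix_inv (transpose U ** U)) D = 0"
proof (rule ccontr)
  assume ne: "frob (matrix_inv (transpose U ** U)) D \<noteq> 0"
  define W where "W = matrix_inv U"
  define E where "E = transpose W ** D ** W"
  define X where "X = transpose U ** U"
  have WU: "W ** U = mat 1" and tWU: "transpose U ** transpose W = mat 1"
    using matrix_inv_left[OF U] transpose_matrix_inv_mult[OF U] W_def by auto
  have "trace E = trace ((W ** transpose W) ** D)"
    unfolding E_def trace_congruence_eq by (rule trace_mul_sym)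
  also have "\<dots> = frob (matrix_inv X) D"
    using frob_sym_eq_trace[OF sym_mat_matrix_inv[OF sym_mat_gram invertible_gram[OF U]]]
    unfolding X_def W_def matrix_inv_gram[OF U] by metis
  finally have "trace E \<noteq> 0" using ne X_def by simp
  then obtain s where s: "\<bar>s\<bar> < 1 / (norm E + 1)" "1 < det (mat 1 + s *\<^sub>R E)"
    using exists_det_mat1_add_gt_1[of E "1 / (norm E + 1)"] norm_ge_zero[of E] by auto
  have "norm (s *\<^sub>R E) < 1"
  proof -
    have "\<bar>s\<bar> * norm E \<le> \<bar>s\<bar> * (norm E + 1)" by (simp add: mult_left_mono)
    also have "\<dots> < 1" using s(1) norm_ge_zero[of E] by (simp add: less_divide_eq)
    finally show ?thesis by simp
  qed
  then have "pd (mat 1 + s *\<^sub>R E)"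
    using pd_mat1_add sym_mat_scaleR[OF sym_mat_congruence[OF symD]] E_def by blast
  moreover have decomp: "transpose U ** (mat 1 + s *\<^sub>R E) ** U = X + s *\<^sub>R D"
  proof -
    have "transpose U ** E ** U = (transpose U ** transpose W) ** D ** (W ** U)"
      unfolding E_def by (simp add: matrix_mul_assoc)
    then show ?thesis unfolding X_def
      by (simp add: matrix_add_ldistrib matrix_add_rdistrib matrix_scaleR_left
          matrix_scaleR_right matrix_mul_assoc tWU WU)
  qed
  ultimately have pdY: "pd (X + s *\<^sub>R D)" using pd_congruence[OF _ U] by metis
  have "det U \<noteq> 0" using U invertible_det_nz by blast
  then have detX: "0 < det X"
    unfolding X_def det_mul det_transpose by (metis not_real_square_gt_zero)
  have "det (X + s *\<^sub>R D) = det X * det (mat 1 + s *\<^sub>R E)"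
    unfolding decomp[symmetric] by (simp add: X_def det_mul mult_ac)
  then have "det X < det (X + s *\<^sub>R D)" using s(2) detX by simp
  then show False using max[of s] pdY detX unfolding X_def by simp
qed

subsection \<open>Semidefinite programs with orthonormal data\<close>

definition orthonormal_data :: "'n::finite rmat \<Rightarrow> nat \<Rightarrow> (nat \<Rightarrow> 'n rmat) \<Rightarrow> bool" where
  "orthonormal_data C M A \<longleftrightarrow> C \<bullet> C = 1 \<and> (\<forall>i<M. A i \<bullet> C = 0) \<and>
     (\<forall>i<M. \<forall>j<M. A i \<bullet> A j = (if i = j then 1 else 0))"

lemma orthonormal_dataI:
  assumes "\<forall>i<M. \<forall>j<M. i \<noteq> j \<longrightarrow> frob (A i) (A j) = 0" "\<forall>i<M. frob (A i) C = 0"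
    and "frob_norm C = 1" "\<forall>i<M. frob_norm (A i) = 1"
  shows "orthonormal_data C M A"
  using assms unfolding orthonormal_data_def frob_norm_def frob_eq_inner by auto

context
  fixes C :: "'n::finite rmat" and M A
  assumes on: "orthonormal_data C M A"
begin

lemma orthonormal_norm_C: "norm C = 1"
  using on by (simp add: orthonormal_data_def norm_eq_sqrt_inner)

lemma inner_A_sum_orthonormal:
  assumes "j < M"
  shows "A j \<bullet> (\<Sum>i<M. c i *\<^sub>R A i) = c j"
proof -
  have "A j \<bullet> (\<Sum>i<M. c i *\<^sub>R A i) = (\<Sum>i<M. if i = j then c i else 0)"
    unfolding inner_sum_right using on assms
    by (intro sum.cong) (auto simp: orthonormal_data_def)
  then show ?thesis using assms by simp
qed

lemma inner_C_sum_orthonormal: "C \<bullet> (\<Sum>i<M. c i *\<^sub>R A i) = 0"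
  using on by (simp add: inner_sum_right orthonormal_data_def inner_commute)

lemma inner_dual_slack:
  fixes c :: "nat \<Rightarrow> real"
  defines "S \<equiv> C - (\<Sum>i<M. c i *\<^sub>R A i)"
  shows "S \<bullet> C = 1" and "j < M \<Longrightarrow> S \<bullet> A j = - c j"
    and "S \<bullet> S = 1 + (\<Sum>i<M. (c i)\<^sup>2)"
proof -
  show SC: "S \<bullet> C = 1"
    using on inner_C_sum_orthonormal unfolding S_def
    by (simp add: inner_diff_left inner_diff_right orthonormal_data_def inner_commute)
  show SA: "S \<bullet> A j = - c j" if "j < M" for j
    using on that inner_A_sum_orthonormal[OF that] unfolding S_def
    by (simp add: inner_diff_left inner_diff_right orthonormal_data_def inner_commute)
  have "S \<bullet> S = S \<bullet> C - (\<Sum>i<M. c i * (S \<bullet> A i))"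
    by (subst (2) S_def) (simp add: inner_diff_right inner_sum_right)
  also have "(\<Sum>i<M. c i * (S \<bullet> A i)) = (\<Sum>i<M. - (c i)\<^sup>2)"
    by (rule sum.cong) (simp_all add: SA power2_eq_square)
  also have "S \<bullet> C - (\<Sum>i<M. - (c i)\<^sup>2) = 1 + (\<Sum>i<M. (c i)\<^sup>2)"
    by (simp add: SC sum_negf)
  finally show "S \<bullet> S = 1 + (\<Sum>i<M. (c i)\<^sup>2)" .
qed

end

lemma frob_lin_comb_feasible:
  assumes "sdp_feasible M A b X"
  shows "frob (a *\<^sub>R C + (\<Sum>i<M. c i *\<^sub>R A i)) X = a * frob C X + (\<Sum>i<M. c i * b i)"
  using assms unfolding sdp_feasible_def frob_eq_inner
  by (simp add: inner_add_left inner_sum_left)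

lemma dual_slack_eq_lin_comb:
  "t *\<^sub>R (C - (\<Sum>i<M. g i *\<^sub>R A i)) = t *\<^sub>R C + (\<Sum>i<M. (- t * g i) *\<^sub>R (A i :: 'n::finite rmat))"
  by (simp add: scaleR_diff_right scaleR_sum_right sum_negf)

lemma frob_dual_slack_feasible:
  assumes "sdp_feasible M A b X"
  shows "frob (t *\<^sub>R (C - (\<Sum>i<M. g i *\<^sub>R A i))) X = t * (frob C X - (\<Sum>i<M. g i * b i))"
  unfolding dual_slack_eq_lin_comb frob_lin_comb_feasible[OF assms]
  by (simp add: sum_negf right_diff_distrib sum_distrib_left mult.assoc)

text \<open>If \<open>Z\<^sup>-\<^sup>1 = U\<^sup>-\<^sup>1 U\<^sup>-\<^sup>T\<close> lies on the dual slack ray \<open>t (C - \<Sum>g\<^sub>i A\<^sub>i)\<close>, then \<open>Z\<close> is within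
  \<open>N / t\<close> of optimal: \<open>N = tr (Z\<^sup>-\<^sup>1 Z)\<close> and \<open>tr (Z\<^sup>-\<^sup>1 X) \<ge> 0\<close> are affine in the cost.\<close>
lemma cost_le_of_inv_dual_slack:
  fixes U C X :: "'n::finite rmat"
  assumes U: "invertible U"
    and Zinv: "matrix_inv (transpose U ** U) = t *\<^sub>R (C - (\<Sum>i<M. g i *\<^sub>R A i))"
    and t: "0 < t" and feasZ: "sdp_feasible M A b (transpose U ** U)"
    and psdX: "psd X" and feasX: "sdp_feasible M A b X"
  shows "frob C (transpose U ** U) - real CARD('n) / t \<le> frob C X"
proof -
  have "real CARD('n) = frob (matrix_inv (transpose U ** U)) (transpose U ** U)"
    using frob_matrix_inv_self[OF sym_mat_gram invertible_gram[OF U]] by simp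
  also have "\<dots> = t * (frob C (transpose U ** U) - (\<Sum>i<M. g i * b i))"
    unfolding Zinv frob_dual_slack_feasible[OF feasZ] ..
  finally have "frob C (transpose U ** U) - real CARD('n) / t = (\<Sum>i<M. g i * b i)"
    using t by (simp add: field_simps)
  moreover have "0 \<le> t * (frob C X - (\<Sum>i<M. g i * b i))"
    using frob_inv_gram_nonneg[OF U psdX] unfolding Zinv frob_dual_slack_feasible[OF feasX] .
  ultimately show ?thesis using t by (simp add: zero_le_mult_iff)
qed

lemma frob_inv_sum_feasible:
  fixes U C X :: "'n::finite rmat"
  assumes U: "invertible U"
    and Zinv: "matrix_inv (transpose U ** U) = l *\<^sub>R C + (\<Sum>i<M. \<mu> i *\<^sub>R A i)"
    and feasZ: "sdp_feasible M A b (transpose U ** U)"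
    and pdX: "pd X" and feasX: "sdp_feasible M A b X"
    and Xinv: "matrix_inv X = t *\<^sub>R (C - (\<Sum>i<M. g i *\<^sub>R A i))"
  shows "frob (matrix_inv (transpose U ** U)) X + frob (matrix_inv X) (transpose U ** U)
          = 2 * real CARD('n) + (t - l) * (frob C (transpose U ** U) - frob C X)"
proof -
  have "real CARD('n) = frob (matrix_inv (transpose U ** U)) (transpose U ** U)"
    using frob_matrix_inv_self[OF sym_mat_gram invertible_gram[OF U]] by simp
  then have "real CARD('n) = l * frob C (transpose U ** U) + (\<Sum>i<M. \<mu> i * b i)"
    unfolding Zinv frob_lin_comb_feasible[OF feasZ] .
  moreover have "real CARD('n) = t * (frob C X - (\<Sum>i<M. g i * b i))"
    using frob_matrix_inv_self[OF pd_imp_sym[OF pdX] pd_imp_invertible[OF pdX]]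
    unfolding Xinv frob_dual_slack_feasible[OF feasX] by simp
  ultimately show ?thesis
    unfolding Zinv Xinv frob_lin_comb_feasible[OF feasX] frob_dual_slack_feasible[OF feasZ]
    by (simp add: algebra_simps)
qed

text \<open>Lagrange multiplier rule for maximising \<open>log det\<close> over an affine slice: moving along any
  symmetric direction \<open>D\<close> orthogonal to \<open>C\<close> and all \<open>A\<^sub>i\<close> stays in the slice, so \<open>Z\<^sup>-\<^sup>1 \<bottom> D\<close>; taking
  \<open>D\<close> the component of \<open>Z\<^sup>-\<^sup>1\<close> orthogonal to their span gives \<open>D = 0\<close>.\<close>
lemma logdet_max_inv_in_span:
  fixes U C :: "'n::finite rmat"
  assumes on: "orthonormal_data C M A" and symC: "sym_mat C" and symA: "\<forall>i<M. sym_mat (A i)"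
    and U: "invertible U" and feasZ: "sdp_feasible M A b (transpose U ** U)"
    and max: "\<And>Y. pd Y \<Longrightarrow> sdp_feasible M A b Y \<Longrightarrow> frob C Y = frob C (transpose U ** U) \<Longrightarrow>
               ln (det Y) \<le> ln (det (transpose U ** U))"
  shows "matrix_inv (transpose U ** U) = frob C (matrix_inv (transpose U ** U)) *\<^sub>R C
            + (\<Sum>i<M. frob (A i) (matrix_inv (transpose U ** U)) *\<^sub>R A i)"
proof -
  define Z where "Z = transpose U ** U"
  define P where "P = matrix_inv Z"
  define l where "l = C \<bullet> P"
  define \<mu> where "\<mu> = (\<lambda>i. A i \<bullet> P)"
  define D where "D = P - l *\<^sub>R C - (\<Sum>i<M. \<mu> i *\<^sub>R A i)"
  have symD: "sym_mat D" unfolding D_def P_def Z_def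
    by (intro sym_mat_diff sym_mat_matrix_inv sym_mat_gram invertible_gram U sym_mat_scaleR symC
        sym_mat_sum) (use symA in auto)
  have DA: "A j \<bullet> D = 0" if "j < M" for j
    using on that inner_A_sum_orthonormal[OF on that, of \<mu>]
    unfolding D_def by (simp add: inner_diff_right orthonormal_data_def \<mu>_def)
  have DC: "C \<bullet> D = 0"
    using on inner_C_sum_orthonormal[OF on, of \<mu>]
    unfolding D_def by (simp add: inner_diff_right orthonormal_data_def l_def)
  have "P \<bullet> D = 0"
    unfolding P_def Z_def frob_eq_inner[symmetric]
  proof (rule frob_inv_eq_0_if_logdet_max[OF U symD])
    fix s assume pd: "pd (transpose U ** U + s *\<^sub>R D)"
    moreover have "sdp_feasible M A b (transpose U ** U + s *\<^sub>R D)"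
      using feasZ DA unfolding sdp_feasible_def frob_eq_inner by (simp add: inner_add_right)
    moreover have "frob C (transpose U ** U + s *\<^sub>R D) = frob C (transpose U ** U)"
      using DC unfolding frob_eq_inner by (simp add: inner_add_right)
    ultimately show "ln (det (transpose U ** U + s *\<^sub>R D)) \<le> ln (det (transpose U ** U))"
      by (rule max)
  qed
  have "D \<bullet> D = D \<bullet> P - l * (D \<bullet> C) - (\<Sum>i<M. \<mu> i * (D \<bullet> A i))"
    by (subst (2) D_def) (simp add: inner_diff_right inner_sum_right)
  also have "(\<Sum>i<M. \<mu> i * (D \<bullet> A i)) = 0"
    using DA by (intro sum.neutral) (simp add: inner_commute)
  finally have "D \<bullet> D = 0" using \<open>P \<bullet> D = 0\<close> DC by (simp add: inner_commute)
  then have "D = 0" by simp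
  then have "P = l *\<^sub>R C + (\<Sum>i<M. \<mu> i *\<^sub>R A i)" unfolding D_def by (simp add: algebra_simps)
  then show ?thesis unfolding P_def Z_def l_def \<mu>_def frob_eq_inner by simp
qed

text \<open>One decomposition step from a point \<open>Z = U\<^sup>T U\<close> on the central path: the feasible
  candidates \<open>U\<^sup>T (I - c V) U = Z - c C\<close> with \<open>V = U\<^sup>-\<^sup>T C U\<^sup>-\<^sup>1\<close> and \<open>c \<parallel>V\<parallel> < R\<close> lower the cost by
  \<open>c\<close>, and \<open>\<parallel>V\<parallel> \<le> \<parallel>Z\<^sup>-\<^sup>1\<parallel> = t \<parallel>C - \<Sum>g\<^sub>i A\<^sub>i\<parallel>\<close>.\<close>
lemma decomposition_step_decrease:
  fixes U C Xd :: "'n::finite rmat"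
  assumes on: "orthonormal_data C M A" and symC: "sym_mat C" and U: "invertible U"
    and Zinv: "matrix_inv (transpose U ** U) = t *\<^sub>R (C - (\<Sum>i<M. g i *\<^sub>R A i))"
    and t: "0 < t" and feasZ: "sdp_feasible M A b (transpose U ** U)"
    and ball: "\<And>F. sym_mat F \<Longrightarrow> norm F < R \<Longrightarrow> mat 1 + F \<in> K" and R: "0 < R"
    and opt: "\<And>X Y. Y \<in> K \<Longrightarrow> sdp_feasible M A b X \<Longrightarrow> X = transpose U ** Y ** U \<Longrightarrow>
                frob C Xd \<le> frob C X"
  shows "frob C Xd \<le> frob C (transpose U ** U) - R / (t * sqrt (1 + (\<Sum>i<M. (g i)\<^sup>2)))"
proof -
  define W where "W = matrix_inv U"
  define V where "V = transpose W ** C ** W"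
  define v where "v = frob C (transpose U ** U)"
  define sg where "sg = sqrt (1 + (\<Sum>i<M. (g i)\<^sup>2))"
  have sg0: "0 < sg" unfolding sg_def by (simp add: sum_nonneg add_pos_nonneg)
  have UVU: "transpose U ** V ** U = C"
  proof -
    have "transpose U ** V ** U = (transpose U ** transpose W) ** C ** (W ** U)"
      unfolding V_def by (simp add: matrix_mul_assoc)
    then show ?thesis by (simp add: W_def matrix_inv_left U transpose_matrix_inv_mult)
  qed
  have "trace V = frob C (W ** transpose W)"
    unfolding V_def frob_sym_eq_trace[OF symC] by (rule trace_congruence_eq)
  also have "\<dots> = t"
    using inner_dual_slack(1)[OF on, of g] unfolding W_def matrix_inv_gram[OF U, symmetric] Zinv
    by (simp add: frob_eq_inner inner_commute)
  finally have "V \<noteq> 0" using t by (auto simp: trace_def)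
  then have nV0: "0 < norm V" by simp
  have "norm V \<le> norm C * norm (matrix_inv (transpose U ** U))"
    unfolding V_def W_def by (rule norm_inv_congruence_le[OF U symC])
  also have "\<dots> = t * sg"
    using orthonormal_norm_C[OF on] inner_dual_slack(3)[OF on, of g] t
    unfolding Zinv sg_def by (simp add: norm_eq_sqrt_inner[of "C - _"])
  finally have "norm V \<le> t * sg" .
  have cost: "frob C Xd \<le> v - r / norm V" if r: "0 \<le> r" "r < R" for r
  proof -
    define c where "c = r / norm V"
    have "sym_mat ((- c) *\<^sub>R V)" unfolding V_def by (intro sym_mat_scaleR sym_mat_congruence symC)
    moreover have "norm ((- c) *\<^sub>R V) < R" using nV0 r by (simp add: c_def)
    ultimately have "mat 1 + (- c) *\<^sub>R V \<in> K" by (rule ball)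
    moreover have "transpose U ** (mat 1 + (- c) *\<^sub>R V) ** U = transpose U ** U - c *\<^sub>R C"
    proof -
      have "transpose U ** (mat 1 + (- c) *\<^sub>R V) ** U
          = transpose U ** U + (- c) *\<^sub>R (transpose U ** V ** U)"
        by (simp only: matrix_add_ldistrib matrix_add_rdistrib matrix_mul_rid
            matrix_scaleR_left matrix_scaleR_right)
      then show ?thesis by (simp add: UVU)
    qed
    moreover have "sdp_feasible M A b (transpose U ** U - c *\<^sub>R C)"
      using feasZ on unfolding sdp_feasible_def frob_eq_inner orthonormal_data_def
      by (simp add: inner_diff_right inner_commute)
    ultimately have "frob C Xd \<le> frob C (transpose U ** U - c *\<^sub>R C)"
      using opt by metis
    also have "\<dots> = v - c"
      using on unfolding v_def frob_eq_inner orthonormal_data_def by (simp add: inner_diff_right)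
    finally show ?thesis unfolding c_def .
  qed
  have "R \<le> (v - frob C Xd) * norm V"
  proof (rule dense_le_bounded[OF R])
    fix r assume "0 < r" "r < R"
    then show "r \<le> (v - frob C Xd) * norm V" using cost[of r] nV0 by (simp add: field_simps)
  qed
  then have "R / norm V \<le> v - frob C Xd" using nV0 by (simp add: field_simps)
  moreover have "R / (t * sg) \<le> R / norm V"
    using \<open>norm V \<le> t * sg\<close> nV0 R t sg0 by (intro divide_left_mono) auto
  ultimately show ?thesis unfolding v_def sg_def by simp
qed

subsection \<open>The central path\<close>

locale central_path =
  fixes C :: "'n::finite rmat" and M :: nat and A :: "nat \<Rightarrow> 'n rmat" and b :: "nat \<Rightarrow> real"
    and Xt :: "real \<Rightarrow> 'n rmat" and \<gamma> :: "real \<Rightarrow> nat \<Rightarrow> real"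
  assumes sym_C: "sym_mat C" and sym_A: "\<forall>i<M. sym_mat (A i)"
    and orthonormal: "orthonormal_data C M A"
    and cost_bdd_below: "bdd_below {frob C X | X. sdp_feasible M A b X \<and> psd X}"
    and central_pd: "0 < t \<Longrightarrow> pd (Xt t)"
    and central_feasible: "0 < t \<Longrightarrow> sdp_feasible M A b (Xt t)"
    and central_inv: "0 < t \<Longrightarrow> matrix_inv (Xt t) = t *\<^sub>R (C - (\<Sum>i<M. \<gamma> t i *\<^sub>R A i))"
begin

abbreviation opt :: real where "opt \<equiv> sdp_opt C M A b"

lemma opt_le_cost: "psd X \<Longrightarrow> sdp_feasible M A b X \<Longrightarrow> opt \<le> frob C X"
  unfolding sdp_opt_def using cost_bdd_below by (intro cInf_lower) auto

lemma opt_le_central_cost: "0 < t \<Longrightarrow> opt \<le> frob C (Xt t)"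
  using opt_le_cost pd_imp_psd central_pd central_feasible by blast

lemma frob_C_central_inv: "0 < t \<Longrightarrow> frob C (matrix_inv (Xt t)) = t"
  using inner_dual_slack(1)[OF orthonormal, of "\<gamma> t"]
  by (simp add: central_inv frob_eq_inner inner_commute)

lemma central_gap:
  fixes U :: "'n rmat"
  assumes t: "0 < t" and U: "invertible U" and XU: "Xt t = transpose U ** U"
  shows "frob C (Xt t) - real CARD('n) / t \<le> opt"
  unfolding sdp_opt_def
proof (rule cInf_greatest)
  show "{frob C X | X. sdp_feasible M A b X \<and> psd X} \<noteq> {}"
    using central_pd[OF t] central_feasible[OF t] pd_imp_psd by blast
  fix x assume "x \<in> {frob C X | X. sdp_feasible M A b X \<and> psd X}"
  then obtain X where "x = frob C X" "sdp_feasible M A b X" "psd X" by blast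
  then show "frob C (Xt t) - real CARD('n) / t \<le> x"
    using cost_le_of_inv_dual_slack[OF U central_inv[OF t, unfolded XU] t
        central_feasible[OF t, unfolded XU]] XU by simp
qed

lemma central_comparison:
  fixes U :: "'n rmat"
  assumes U: "invertible U" and feas: "sdp_feasible M A b (transpose U ** U)"
    and Zinv: "matrix_inv (transpose U ** U) = l *\<^sub>R C + (\<Sum>i<M. \<mu> i *\<^sub>R A i)" and s: "0 < s"
  shows "0 \<le> (s - l) * (frob C (transpose U ** U) - frob C (Xt s))"
    and "(s - l) * (frob C (transpose U ** U) - frob C (Xt s)) = 0 \<Longrightarrow> transpose U ** U = Xt s"
proof -
  note sum_eq = frob_inv_sum_feasible[OF U Zinv feas central_pd[OF s] central_feasible[OF s]
      central_inv[OF s]]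
  show "0 \<le> (s - l) * (frob C (transpose U ** U) - frob C (Xt s))"
    using sum_eq frob_inv_sum_ge[OF U central_pd[OF s]] by linarith
  show "transpose U ** U = Xt s" if "(s - l) * (frob C (transpose U ** U) - frob C (Xt s)) = 0"
    using sum_eq that by (intro frob_inv_sum_eq_imp_eq[OF U central_pd[OF s]]) linarith
qed

lemma central_cost_strict_decreasing:
  fixes U :: "'n rmat"
  assumes s: "0 < s" and st: "s < t" and U: "invertible U" and XU: "Xt s = transpose U ** U"
  shows "frob C (Xt t) < frob C (Xt s)"
proof -
  have t: "0 < t" using s st by simp
  note cmp = central_comparison[OF U central_feasible[OF s, unfolded XU]
      central_inv[OF s, unfolded XU dual_slack_eq_lin_comb] t]
  have "frob C (Xt t) \<le> frob C (Xt s)"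
    using cmp(1) st XU by (simp add: zero_le_mult_iff)
  moreover have "frob C (Xt t) \<noteq> frob C (Xt s)"
  proof
    assume "frob C (Xt t) = frob C (Xt s)"
    then have "transpose U ** U = Xt t" using XU by (intro cmp(2)) simp
    then have "Xt s = Xt t" using XU by simp
    then show False using frob_C_central_inv[OF s] frob_C_central_inv[OF t] st by simp
  qed
  ultimately show ?thesis by simp
qed

lemma opt_less_central_cost:
  fixes U :: "'n rmat"
  assumes "0 < t" "invertible U" "Xt t = transpose U ** U"
  shows "opt < frob C (Xt t)"
  using central_cost_strict_decreasing[OF assms(1) _ assms(2,3), of "2 * t"]
    opt_le_central_cost[of "2 * t"] assms(1) by simp

text \<open>A maximiser \<open>Z\<close> of \<open>log det\<close> on a cost slice satisfies \<open>Z\<^sup>-\<^sup>1 = \<lambda> C + \<Sum>\<mu>\<^sub>i A\<^sub>i\<close> with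
  \<open>\<lambda> = tr (C Z\<^sup>-\<^sup>1)\<close>; comparing with \<open>X\<^sub>t\<^sub>0\<close> shows \<open>\<lambda> \<ge> t\<^sub>0\<close>, and comparing with \<open>X\<^sub>\<lambda>\<close> gives \<open>Z = X\<^sub>\<lambda>\<close>.\<close>
lemma logdet_center_on_central_path:
  fixes U :: "'n rmat"
  assumes t0: "0 < t0" and U: "invertible U" and feas: "sdp_feasible M A b (transpose U ** U)"
    and max: "\<And>Y. pd Y \<Longrightarrow> sdp_feasible M A b Y \<Longrightarrow> frob C Y = frob C (transpose U ** U) \<Longrightarrow>
               ln (det Y) \<le> ln (det (transpose U ** U))"
    and below: "frob C (transpose U ** U) \<le> frob C (Xt t0)"
  shows "\<exists>t\<ge>t0. transpose U ** U = Xt t"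
proof -
  define l where "l = frob C (matrix_inv (transpose U ** U))"
  have "matrix_inv (transpose U ** U)
      = l *\<^sub>R C + (\<Sum>i<M. frob (A i) (matrix_inv (transpose U ** U)) *\<^sub>R A i)"
    unfolding l_def using orthonormal sym_C sym_A U feas max by (rule logdet_max_inv_in_span)
  note cmp = central_comparison[OF U feas this]
  have "t0 \<le> l"
  proof (rule ccontr)
    assume "\<not> t0 \<le> l"
    then have "0 \<le> frob C (transpose U ** U) - frob C (Xt t0)"
      using cmp(1)[OF t0] by (simp add: zero_le_mult_iff)
    then have "transpose U ** U = Xt t0" using below by (intro cmp(2)[OF t0]) simp
    then have "l = t0" using frob_C_central_inv[OF t0] l_def by simp
    then show False using \<open>\<not> t0 \<le> l\<close> by simp
  qed
  moreover have "transpose U ** U = Xt l" using t0 \<open>t0 \<le> l\<close> by (intro cmp(2)) simp_all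
  ultimately show ?thesis by blast
qed

lemma central_multipliers_bdd_above:
  fixes U :: "'n rmat"
  assumes t0: "0 < t0" and U: "invertible U" and X0: "Xt t0 = transpose U ** U"
  shows "bdd_above ((\<lambda>t. \<Sum>i<M. (\<gamma> t i)\<^sup>2) ` {t0..})"
proof (rule bdd_aboveI2)
  define N where "N = real CARD('n)"
  define B where "B = (norm (matrix_inv U))\<^sup>2 * N * (frob C (Xt t0) - opt + N / t0)"
  fix t assume "t \<in> {t0..}"
  then have t: "0 < t" "t0 \<le> t" using t0 by auto
  define S where "S = C - (\<Sum>i<M. \<gamma> t i *\<^sub>R A i)"
  have S_eq: "S = (1 / t) *\<^sub>R matrix_inv (Xt t)" using central_inv[OF t(1)] t by (simp add: S_def)
  then have "pd S" using pd_scaleR[OF pd_matrix_inv[OF central_pd[OF t(1)]]] t by simp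
  have "N = frob (matrix_inv (Xt t)) (Xt t)"
    using frob_matrix_inv_self central_pd[OF t(1)] pd_imp_sym pd_imp_invertible N_def by metis
  also have "\<dots> = t * (frob C (Xt t) - (\<Sum>i<M. \<gamma> t i * b i))"
    unfolding central_inv[OF t(1)] by (rule frob_dual_slack_feasible[OF central_feasible[OF t(1)]])
  finally have "(\<Sum>i<M. \<gamma> t i * b i) = frob C (Xt t) - N / t" using t by (simp add: field_simps)
  moreover have "frob S (Xt t0) = frob C (Xt t0) - (\<Sum>i<M. \<gamma> t i * b i)"
    using frob_dual_slack_feasible[OF central_feasible[OF t0], of 1 C "\<gamma> t"] by (simp add: S_def)
  ultimately have "frob S (Xt t0) = frob C (Xt t0) - frob C (Xt t) + N / t" by simp
  also have "\<dots> \<le> frob C (Xt t0) - opt + N / t0"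
    using opt_le_central_cost[OF t(1)] divide_left_mono[OF t(2), of N] t t0
    by (simp add: N_def)
  finally have "frob S (Xt t0) \<le> frob C (Xt t0) - opt + N / t0" .
  have "norm S \<le> (norm (matrix_inv U))\<^sup>2 * N * frob S (Xt t0)"
    using pd_norm_le_frob_gram[OF U \<open>pd S\<close>] unfolding X0 N_def .
  also have "\<dots> \<le> B"
    unfolding B_def using \<open>frob S (Xt t0) \<le> _\<close> by (intro mult_left_mono) (auto simp: N_def)
  finally have "norm S \<le> B" .
  then have "(norm S)\<^sup>2 \<le> B\<^sup>2" by (intro power_mono) simp_all
  then have "1 + (\<Sum>i<M. (\<gamma> t i)\<^sup>2) \<le> B\<^sup>2"
    using inner_dual_slack(3)[OF orthonormal, of "\<gamma> t"] by (simp add: S_def power2_norm_eq_inner)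
  then show "(\<Sum>i<M. (\<gamma> t i)\<^sup>2) \<le> B\<^sup>2" by simp
qed

end

subsection \<open>The decomposition algorithm\<close>

lemma gap_geometric_decay:
  fixes f \<tau> :: "nat \<Rightarrow> real"
  assumes q: "0 \<le> q" "q \<le> 1" and \<epsilon>: "0 < \<epsilon>" and N: "0 \<le> N" and t0: "0 < t0"
    and \<tau>: "\<And>k. t0 \<le> \<tau> k" and gap: "\<And>k. f k \<le> N / \<tau> k"
    and mono: "\<And>k. f (Suc k) \<le> f k"
    and decrease: "\<And>k. \<tau> k \<le> N / \<epsilon> \<Longrightarrow> f (Suc k) \<le> f k - q * (N / \<tau> k)"
  shows "f k \<le> max \<epsilon> (N / t0 * (1 - q) ^ k)"
proof (induction k)
  case 0
  have "N / \<tau> 0 \<le> N / t0" using N t0 \<tau>[of 0] by (intro divide_left_mono) auto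
  then show ?case using gap[of 0] by simp
next
  case (Suc k)
  have \<tau>_pos: "0 < \<tau> k" using t0 \<tau>[of k] by linarith
  show ?case
  proof (cases "\<tau> k \<le> N / \<epsilon>")
    case True
    have "q * f k \<le> q * (N / \<tau> k)" using gap[of k] q(1) by (rule mult_left_mono)
    then have "f (Suc k) \<le> (1 - q) * f k"
      using decrease[OF True] by (simp add: algebra_simps)
    also have "\<dots> \<le> (1 - q) * max \<epsilon> (N / t0 * (1 - q) ^ k)"
      using Suc.IH q by (intro mult_left_mono) auto
    also have "\<dots> = max ((1 - q) * \<epsilon>) (N / t0 * (1 - q) ^ Suc k)"
      using q by (simp add: max_mult_distrib_left mult_ac)
    also have "\<dots> \<le> max \<epsilon> (N / t0 * (1 - q) ^ Suc k)"
      using q \<epsilon> by (intro max.mono) (auto simp: mult_le_cancel_right1)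
    finally show ?thesis .
  next
    case False
    then have "N / \<tau> k \<le> \<epsilon>" using \<epsilon> \<tau>_pos by (simp add: field_simps)
    then show ?thesis using mono[of k] gap[of k] by simp
  qed
qed

lemma ceiling_log_iterations:
  fixes N t0 \<epsilon> c :: real
  assumes N: "0 < N" and t0: "0 < t0" and \<epsilon>: "0 < \<epsilon>" and c: "1 < c"
  shows "N / t0 \<le> \<epsilon> * c ^ nat \<lceil>(ln (N / \<epsilon>) - ln t0) / ln c\<rceil>"
proof -
  define \<kappa> where "\<kappa> = nat \<lceil>(ln (N / \<epsilon>) - ln t0) / ln c\<rceil>"
  have "(ln (N / \<epsilon>) - ln t0) / ln c \<le> real \<kappa>" unfolding \<kappa>_def by linarith
  then have "ln (N / \<epsilon>) - ln t0 \<le> real \<kappa> * ln c" using c by (simp add: divide_le_eq)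
  also have "\<dots> = ln (c ^ \<kappa>)" using c by (simp add: ln_realpow)
  finally have "ln (N / (\<epsilon> * t0)) \<le> ln (c ^ \<kappa>)" using N t0 \<epsilon> by (simp add: ln_div ln_mult)
  then have "N / (\<epsilon> * t0) \<le> c ^ \<kappa>" using N t0 \<epsilon> c by simp
  then show ?thesis using t0 \<epsilon> unfolding \<kappa>_def[symmetric] by (simp add: field_simps)
qed

locale decomposition_algorithm = central_path C M A b Xt \<gamma>
  for C :: "'n::finite rmat" and M A b Xt \<gamma> +
  fixes K :: "'n rmat set" and \<Phi> t0 :: real and Xs Xdec U :: "nat \<Rightarrow> 'n rmat"
  assumes ball_in_K: "\<And>F. sym_mat F \<Longrightarrow> norm F < sqrt \<Phi> \<Longrightarrow> mat 1 + F \<in> K"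
    and \<Phi>_pos: "0 < \<Phi>" and t0_pos: "0 < t0" and init: "Xs 0 = Xt t0"
    and factor_invertible: "invertible (U k)" and factor_gram: "Xs k = transpose (U k) ** U k"
    and decomposition_opt: "\<And>X Y. Y \<in> K \<Longrightarrow> sdp_feasible M A b X \<Longrightarrow>
          X = transpose (U k) ** Y ** U k \<Longrightarrow> frob C (Xdec (Suc k)) \<le> frob C X"
    and centering_feasible: "sdp_feasible M A b (Xs (Suc k))"
    and centering_cost: "frob C (Xs (Suc k)) = frob C (Xdec (Suc k))"
    and centering_max: "\<And>X. pd X \<Longrightarrow> sdp_feasible M A b X \<Longrightarrow> frob C X = frob C (Xdec (Suc k)) \<Longrightarrow>
          ln (det X) \<le> ln (det (Xs (Suc k)))"
begin

lemma iterate_decrease: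
  assumes t: "0 < t" and k: "Xs k = Xt t"
  shows "frob C (Xs (Suc k)) \<le> frob C (Xs k) - sqrt \<Phi> / (t * sqrt (1 + (\<Sum>i<M. (\<gamma> t i)\<^sup>2)))"
proof -
  have "frob C (Xdec (Suc k))
      \<le> frob C (transpose (U k) ** U k) - sqrt \<Phi> / (t * sqrt (1 + (\<Sum>i<M. (\<gamma> t i)\<^sup>2)))"
    using orthonormal sym_C factor_invertible central_inv[OF t, folded k, unfolded factor_gram] t
      central_feasible[OF t, folded k, unfolded factor_gram] ball_in_K
      real_sqrt_gt_zero[OF \<Phi>_pos] decomposition_opt
    by (rule decomposition_step_decrease)
  then show ?thesis using centering_cost factor_gram by simp
qed

lemma iterate_cost_le:
  assumes "0 < t" "Xs k = Xt t"
  shows "frob C (Xs (Suc k)) \<le> frob C (Xs k)"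
proof -
  have "0 \<le> sqrt \<Phi> / (t * sqrt (1 + (\<Sum>i<M. (\<gamma> t i)\<^sup>2)))"
    using \<Phi>_pos assms(1) by (intro divide_nonneg_nonneg mult_nonneg_nonneg) (auto simp: sum_nonneg)
  then show ?thesis using iterate_decrease[OF assms] by linarith
qed

lemma iterates_on_central_path: "\<exists>t\<ge>t0. Xs k = Xt t"
proof -
  have "(\<exists>t\<ge>t0. Xs k = Xt t) \<and> frob C (Xs k) \<le> frob C (Xt t0)"
  proof (induction k)
    case 0
    show ?case using init by auto
  next
    case (Suc k)
    then obtain t where t: "t0 \<le> t" "Xs k = Xt t" by blast
    then have below: "frob C (Xs (Suc k)) \<le> frob C (Xt t0)"
      using iterate_cost_le[of t k] Suc.IH t0_pos by fastforce
    have "\<exists>t\<ge>t0. transpose (U (Suc k)) ** U (Suc k) = Xt t"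
    proof (rule logdet_center_on_central_path[OF t0_pos factor_invertible])
      show "sdp_feasible M A b (transpose (U (Suc k)) ** U (Suc k))"
        using centering_feasible factor_gram by metis
      show "frob C (transpose (U (Suc k)) ** U (Suc k)) \<le> frob C (Xt t0)"
        using below factor_gram by metis
      fix Y assume "pd Y" "sdp_feasible M A b Y"
        "frob C Y = frob C (transpose (U (Suc k)) ** U (Suc k))"
      then show "ln (det Y) \<le> ln (det (transpose (U (Suc k)) ** U (Suc k)))"
        using centering_max centering_cost factor_gram by metis
    qed
    then show ?case using below factor_gram by metis
  qed
  then show ?thesis by blast
qed

lemma iterate_decrease_uniform:
  assumes t: "0 < t" and k: "Xs k = Xt t" and \<Theta>: "(\<Sum>i<M. (\<gamma> t i)\<^sup>2) \<le> \<Theta>"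
  shows "frob C (Xs (Suc k))
           \<le> frob C (Xs k) - sqrt \<Phi> / (real CARD('n) * sqrt (1 + \<Theta>)) * (real CARD('n) / t)"
proof -
  have "0 < sqrt (1 + (\<Sum>i<M. (\<gamma> t i)\<^sup>2))" by (simp add: sum_nonneg add_pos_nonneg)
  moreover have "sqrt (1 + (\<Sum>i<M. (\<gamma> t i)\<^sup>2)) \<le> sqrt (1 + \<Theta>)" using \<Theta> by simp
  ultimately have "sqrt \<Phi> / (t * sqrt (1 + \<Theta>)) \<le> sqrt \<Phi> / (t * sqrt (1 + (\<Sum>i<M. (\<gamma> t i)\<^sup>2)))"
    using t \<Phi>_pos by (intro divide_left_mono mult_left_mono mult_pos_pos) auto
  moreover have "sqrt \<Phi> / (real CARD('n) * sqrt (1 + \<Theta>)) * (real CARD('n) / t)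
      = sqrt \<Phi> / (t * sqrt (1 + \<Theta>))"
    by simp
  ultimately show ?thesis using iterate_decrease[OF t k] by linarith
qed

lemma optimality_gap_decay:
  assumes \<epsilon>: "0 < \<epsilon>" and T: "t0 \<le> real CARD('n) / \<epsilon>"
    and \<Theta>: "\<And>t. t0 \<le> t \<Longrightarrow> t \<le> real CARD('n) / \<epsilon> \<Longrightarrow> (\<Sum>i<M. (\<gamma> t i)\<^sup>2) \<le> \<Theta>"
  defines "q \<equiv> sqrt \<Phi> / (real CARD('n) * sqrt (1 + \<Theta>))"
  shows "0 < q" and "q < 1"
    and "frob C (Xs k) - opt \<le> max \<epsilon> (real CARD('n) / t0 * (1 - q) ^ k)"
proof -
  define N where "N = real CARD('n)"
  have N: "0 < N" unfolding N_def by simp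
  define \<tau> where "\<tau> k = (SOME t. t0 \<le> t \<and> Xs k = Xt t)" for k
  have \<tau>: "t0 \<le> \<tau> k" "Xs k = Xt (\<tau> k)" for k
    using someI_ex[OF iterates_on_central_path[of k]] unfolding \<tau>_def by auto
  have \<tau>_pos: "0 < \<tau> k" for k using \<tau>(1)[of k] t0_pos by linarith
  have XU: "Xt (\<tau> k) = transpose (U k) ** U k" for k using \<tau>(2)[of k] factor_gram[of k] by simp
  have gap: "frob C (Xs k) - opt \<le> N / \<tau> k" for k
    using central_gap[OF \<tau>_pos factor_invertible XU, of k] \<tau>(2)[of k] unfolding N_def by simp
  have "0 \<le> \<Theta>" using \<Theta>[OF order_refl T] by (meson order_trans sum_nonneg zero_le_power2)
  then show "0 < q" unfolding q_def using \<Phi>_pos by simp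
  have decrease: "frob C (Xs (Suc k)) - opt \<le> (frob C (Xs k) - opt) - q * (N / \<tau> k)"
    if "\<tau> k \<le> N / \<epsilon>" for k
    using iterate_decrease_uniform[OF \<tau>_pos \<tau>(2) \<Theta>[OF \<tau>(1) that[unfolded N_def]]]
    unfolding q_def N_def by simp
  have "frob C (Xs 1) \<le> frob C (Xs 0) - q * (N / t0)"
    using iterate_decrease_uniform[OF t0_pos init \<Theta>[OF order_refl T]] unfolding q_def N_def by simp
  moreover have "frob C (Xs 0) - N / t0 \<le> opt"
    using central_gap[OF t0_pos factor_invertible[of 0]] init factor_gram[of 0]
    unfolding N_def by simp
  moreover have "opt < frob C (Xs 1)"
    using opt_less_central_cost[OF \<tau>_pos factor_invertible XU] \<tau>(2)[of 1] by simp
  ultimately have "q * (N / t0) < 1 * (N / t0)" by linarith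
  then show "q < 1" by (simp only: mult_less_cancel_right_pos[OF divide_pos_pos[OF N t0_pos]])
  have mono: "frob C (Xs (Suc k)) - opt \<le> frob C (Xs k) - opt" for k
    using iterate_cost_le[OF \<tau>_pos \<tau>(2)] by simp
  show "frob C (Xs k) - opt \<le> max \<epsilon> (real CARD('n) / t0 * (1 - q) ^ k)"
    unfolding N_def[symmetric]
    using gap_geometric_decay[where f = "\<lambda>k. frob C (Xs k) - opt" and \<tau> = \<tau>,
        OF _ _ \<epsilon> _ t0_pos \<tau>(1) gap mono decrease] \<open>0 < q\<close> \<open>q < 1\<close> N by simp
qed

lemma epsilon_optimal_within_kappa:
  assumes \<epsilon>: "0 < \<epsilon>" and \<epsilon>_le: "\<epsilon> \<le> real CARD('n) / t0"
  shows "let N = real CARD('n); tstar = N / \<epsilon>;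
             Theta = (SUP t\<in>{t0..tstar}. \<Sum>i<M. (\<gamma> t i)\<^sup>2);
             chi = N * sqrt (1 + Theta) / (N * sqrt (1 + Theta) - sqrt \<Phi>);
             kappa = nat \<lceil>(ln (N / \<epsilon>) - ln t0) / ln chi\<rceil>
         in 1 < chi \<and> frob C (Xs kappa) - opt \<le> \<epsilon>"
proof -
  define N T where "N = real CARD('n)" and "T = N / \<epsilon>"
  define \<Theta> where "\<Theta> = (SUP t\<in>{t0..T}. \<Sum>i<M. (\<gamma> t i)\<^sup>2)"
  define chi where "chi = N * sqrt (1 + \<Theta>) / (N * sqrt (1 + \<Theta>) - sqrt \<Phi>)"
  define kappa where "kappa = nat \<lceil>(ln (N / \<epsilon>) - ln t0) / ln chi\<rceil>"
  have T: "t0 \<le> T" using \<epsilon>_le \<epsilon> t0_pos unfolding T_def N_def by (simp add: field_simps)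
  have "bdd_above ((\<lambda>t. \<Sum>i<M. (\<gamma> t i)\<^sup>2) ` {t0..T})"
    using central_multipliers_bdd_above[OF t0_pos factor_invertible[of 0]] init factor_gram[of 0]
    by (auto elim!: bdd_above_mono)
  then have "(\<Sum>i<M. (\<gamma> t i)\<^sup>2) \<le> \<Theta>" if "t0 \<le> t" "t \<le> T" for t
    unfolding \<Theta>_def using that by (intro cSUP_upper) auto
  note decay = optimality_gap_decay[OF \<epsilon> T[unfolded T_def N_def] this[unfolded T_def N_def]]
  define q where "q = sqrt \<Phi> / (N * sqrt (1 + \<Theta>))"
  have q: "0 < q" "q < 1" and gap: "frob C (Xs kappa) - opt \<le> max \<epsilon> (N / t0 * (1 - q) ^ kappa)"
    using decay unfolding q_def N_def by auto
  define a where "a = N * sqrt (1 + \<Theta>)"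
  have "0 < a" using q \<Phi>_pos unfolding q_def a_def[symmetric] by (auto simp: zero_less_divide_iff)
  then have "1 - q = 1 / chi" and chi: "1 < chi"
    using q \<Phi>_pos unfolding q_def chi_def a_def[symmetric] by (simp_all add: field_simps)
  have "N / t0 \<le> \<epsilon> * chi ^ kappa"
    unfolding kappa_def using t0_pos \<epsilon> chi by (intro ceiling_log_iterations) (simp_all add: N_def)
  moreover have "0 < chi ^ kappa" using chi by simp
  ultimately have "N / t0 * (1 - q) ^ kappa \<le> \<epsilon>"
    unfolding \<open>1 - q = 1 / chi\<close> power_one_over
    by (simp add: pos_divide_le_eq[symmetric] mult.commute)
  then have "frob C (Xs kappa) - opt \<le> \<epsilon>" using gap \<epsilon> by simp
  then show ?thesis
    using chi unfolding Let_def kappa_def chi_def \<Theta>_def T_def N_def by simp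
qed

end

lemma cholesky_factor_invertible:
  fixes U X :: "'n::{finite,wellorder} rmat"
  assumes "cholesky_factor U X"
  shows "invertible U"
proof -
  have "det U = (\<Prod>i\<in>UNIV. U$i$i)"
    using assms unfolding cholesky_factor_def by (intro det_upperdiagonal) blast
  also have "\<dots> > 0" using assms unfolding cholesky_factor_def by (intro prod_pos) blast
  finally show ?thesis by (simp add: invertible_det_nz)
qed

lemma mat1_add_mem_dd_or_sdd:
  fixes F :: "'n::finite rmat"
  assumes K: "(K = {Y. dd Y} \<and> 0 < \<Phi> \<and> \<Phi> \<le> 2 / (real CARD('n) + 1))
              \<or> (K = {Y. sdd Y} \<and> 0 < \<Phi> \<and> \<Phi> \<le> 1)"
    and F: "sym_mat F" "norm F < sqrt \<Phi>"
  shows "mat 1 + F \<in> K"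
  using K
proof
  assume K: "K = {Y. dd Y} \<and> 0 < \<Phi> \<and> \<Phi> \<le> 2 / (real CARD('n) + 1)"
  have "(norm F)\<^sup>2 \<le> \<Phi>" using F K by (metis norm_ge_zero power_mono real_sqrt_pow2 less_imp_le)
  then show ?thesis using dd_mat1_add[OF F(1)] K by auto
next
  assume K: "K = {Y. sdd Y} \<and> 0 < \<Phi> \<and> \<Phi> \<le> 1"
  then have "sqrt \<Phi> \<le> 1" by simp
  then have "norm F < 1" using F(2) by linarith
  then show ?thesis using sdd_mat1_add[OF F(1)] K by auto
qed

theorem theorem4p12:
  fixes C :: "('n::{finite,wellorder}) rmat"
    and M :: nat and A :: "nat \<Rightarrow> 'n rmat" and b :: "nat \<Rightarrow> real"
    and Xt :: "real \<Rightarrow> 'n rmat" and \<gamma> :: "real \<Rightarrow> nat \<Rightarrow> real"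
    and K :: "'n rmat set" and \<Phi> t0 \<epsilon> :: real
    and Xs Xdec U :: "nat \<Rightarrow> 'n rmat"
  assumes symC: "sym_mat C" and symA: "\<forall>i<M. sym_mat (A i)"
    and orthA: "\<forall>i<M. \<forall>j<M. i \<noteq> j \<longrightarrow> frob (A i) (A j) = 0"
    and orthC: "\<forall>i<M. frob (A i) C = 0"
    and normC: "frob_norm C = 1" and normA: "\<forall>i<M. frob_norm (A i) = 1"
    and strict_feas: "\<exists>X. pd X \<and> sdp_feasible M A b X"
    and bounded: "bdd_below {frob C X | X. sdp_feasible M A b X \<and> psd X}"
    and central: "\<forall>t>0. pd (Xt t) \<and> sdp_feasible M A b (Xt t) \<and>
        (\<forall>X. pd X \<and> sdp_feasible M A b X \<longrightarrow>
           frob C (Xt t) - ln (det (Xt t)) / t \<le> frob C X - ln (det X) / t)"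
    and multipliers: "\<forall>t>0. matrix_inv (Xt t) = t *\<^sub>R (C - (\<Sum>i<M. \<gamma> t i *\<^sub>R A i))"
    and K_choice: "(K = {Y. dd Y} \<and> 0 < \<Phi> \<and> \<Phi> \<le> 2 / (real CARD('n) + 1))
                 \<or> (K = {Y. sdd Y} \<and> 0 < \<Phi> \<and> \<Phi> \<le> 1)"
    and t0_pos: "0 < t0" and eps_pos: "0 < \<epsilon>" and eps_le: "\<epsilon> \<le> real CARD('n) / t0"
    and init: "Xs 0 = Xt t0"
    and chol: "\<forall>k\<ge>1. cholesky_factor (U (k - 1)) (Xs (k - 1))"
    and dec_step: "\<forall>k\<ge>1.
        (\<exists>Y\<in>K. Xdec k = transpose (U (k - 1)) ** Y ** U (k - 1)) \<and> sdp_feasible M A b (Xdec k) \<and>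
        (\<forall>X. \<forall>Y\<in>K. sdp_feasible M A b X \<and> X = transpose (U (k - 1)) ** Y ** U (k - 1)
              \<longrightarrow> frob C (Xdec k) \<le> frob C X)"
    and center_step: "\<forall>k\<ge>1.
        pd (Xs k) \<and> sdp_feasible M A b (Xs k) \<and> frob C (Xs k) = frob C (Xdec k) \<and>
        (\<forall>X. pd X \<and> sdp_feasible M A b X \<and> frob C X = frob C (Xdec k)
              \<longrightarrow> ln (det X) \<le> ln (det (Xs k)))"
  shows "let N = real CARD('n); tstar = N / \<epsilon>;
             Theta = (SUP t\<in>{t0..tstar}. \<Sum>i<M. (\<gamma> t i)\<^sup>2);
             chi = N * sqrt (1 + Theta) / (N * sqrt (1 + Theta) - sqrt \<Phi>);
             kappa = nat \<lceil>(ln (N / \<epsilon>) - ln t0) / ln chi\<rceil>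
         in 1 < chi \<and> frob C (Xs kappa) - sdp_opt C M A b \<le> \<epsilon>"
proof -
  have chol_k: "cholesky_factor (U k) (Xs k)" for k using chol[rule_format, of "Suc k"] by simp
  interpret decomposition_algorithm C M A b Xt \<gamma> K \<Phi> t0 Xs Xdec U
  proof
    show "orthonormal_data C M A" using orthA orthC normC normA by (rule orthonormal_dataI)
    show "\<And>F. sym_mat F \<Longrightarrow> norm F < sqrt \<Phi> \<Longrightarrow> mat 1 + F \<in> K"
      using K_choice by (rule mat1_add_mem_dd_or_sdd)
    show "invertible (U k)" "Xs k = transpose (U k) ** U k" for k
      using cholesky_factor_invertible[OF chol_k] chol_k by (auto simp: cholesky_factor_def)
    fix k
    show "\<And>X Y. Y \<in> K \<Longrightarrow> sdp_feasible M A b X \<Longrightarrow> X = transpose (U k) ** Y ** U k \<Longrightarrow>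
        frob C (Xdec (Suc k)) \<le> frob C X"
      using dec_step[rule_format, of "Suc k"] by auto
    show "sdp_feasible M A b (Xs (Suc k))" "frob C (Xs (Suc k)) = frob C (Xdec (Suc k))"
      "\<And>X. pd X \<Longrightarrow> sdp_feasible M A b X \<Longrightarrow> frob C X = frob C (Xdec (Suc k)) \<Longrightarrow>
         ln (det X) \<le> ln (det (Xs (Suc k)))"
      using center_step[rule_format, of "Suc k"] by auto
  qed (use symC symA bounded central multipliers K_choice t0_pos init in auto)
  show ?thesis using eps_pos eps_le by (rule epsilon_optimal_within_kappa)
qed

end
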